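(* Let $L_{+-}$ be an oriented link diagram containing two crossings between two distinct components, the first positive and the second negative. For $\varepsilon,\delta\in\{+,-,0\}$ let $L_{\varepsilon\delta}$ denote the link obtained by making the first crossing of type $\varepsilon$ and the second of type $\delta$ (where $+$, $-$ mean positive/negative crossing and $0$ means the orientation-preserving smoothing). Then $$(t^2+t)\,[\Phi(L_{+-};t)-\Phi(L_{-+};t)]=(t-1)\,[\Phi(L_{0-};t)-\Phi(L_{-0};t)],$$ and for every integer $i\ge1$ $$\phi_i(L_{+-})-\phi_i(L_{-+})=-[\phi_i(L_{0-})-\phi_i(L_{-0})]-\tfrac32[\phi_{i-1}(L_{+-})-\phi_{i-1}(L_{-+})]-\tfrac12[\phi_{i-2}(L_{+-})-\phi_{i-2}(L_{-+})].$$
   Context: Let $\#L$ denote the number of components. $V(L;t)$ is the Jones polynomial normalized by $V(O;t)=1$ for the unknot, $V(\emptyset;t)=(t^{1/2}+t^{-1/2})^{-1}$, and $tV(L_+;t)-t^{-1}V(L_-;t)=(t^{1/2}-t^{-1/2})V(L_0;t)$; $X(L;t)=V(L;t)/(t^{1/2}+t^{-1/2})^{\#L-1}$; $\Phi(L;t)=\sum_{L'\subset L}(-1)^{\#L-\#L'}X(L';t)$ over all sublinks including $\emptyset$ and $L$, with $\Phi(\emptyset;t)=0$; $\Phi_i(L)=\frac{d^i}{dt^i}\Phi(L;t)|_{t=1}$; $\phi_j(L)=\frac{(-2)^{\#L}}{(\#L+j)!}\Phi_{\#L+j}(L)$ for all integers $j\ge-\#L$. Note $\#L_{+-}=\#L_{-+}=\#L_{0-}+1=\#L_{-0}+1\ge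 2$. *)

theory Defs
  imports "HOL-Analysis.Analysis"
begin

text \<open>Combinatorial oriented link diagrams (generalised PD codes).  A site is a 4-tuple (p,q,r,s)
  of arc labels listed counterclockwise around the site (viewed from above), where
  p and s are the incoming ends and q and r the outgoing ends; the two strands
  through the site are p to r and s to q.  The type of a site is Pos (positive
  crossing: the strand p to r passes under), Neg (negative crossing: the strand
  p to r passes over), or Zero (the oriented smoothing: p is joined to q, s to r).
  Arc labels occurring in no site are crossingless circles.\<close>

datatype ctype = Pos | Neg | Zero

type_synonym site = "nat \<times> nat \<times> nat \<times> nat"
type_synonym diagram = "nat set \<times> (site \<times> ctype) list"

definition arcs :: "diagram \<Rightarrow> nat set" where
  "arcs D = fst D"

definition sites :: "diagram \<Rightarrow> (site \<times> ctype) list" where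
  "sites D = snd D"

definition site_lab :: "site \<Rightarrow> nat \<Rightarrow> nat" where
  "site_lab x i = (case x of (p, q, r, s) \<Rightarrow>
     if i = 0 then p else if i = 1 then q else if i = 2 then r else s)"

definition in_ends :: "diagram \<Rightarrow> nat list" where
  "in_ends D = concat (map (\<lambda>(x, c). [site_lab x 0, site_lab x 3]) (sites D))"

definition out_ends :: "diagram \<Rightarrow> nat list" where
  "out_ends D = concat (map (\<lambda>(x, c). [site_lab x 1, site_lab x 2]) (sites D))"

text \<open>Every arc has exactly one tail (outgoing end) and one head (incoming end),
  or is a crossingless circle.\<close>
definition wf_diagram :: "diagram \<Rightarrow> bool" where
  "wf_diagram D \<longleftrightarrow> finite (arcs D) \<and> set (in_ends D) \<subseteq> arcs D \<and>
     (\<forall>a. count_list (in_ends D) a = count_list (out_ends D) a) \<and>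
     (\<forall>a. count_list (in_ends D) a \<le> 1)"

definition equiv_cl :: "('a \<times> 'a) set \<Rightarrow> ('a \<times> 'a) set" where
  "equiv_cl R = (R \<union> R\<inverse>)\<^sup>*"

subsection \<open>Planarity (classical, not virtual, diagrams)\<close>

definition darts :: "diagram \<Rightarrow> (nat \<times> nat) set" where
  "darts D = {(k, i). k < length (sites D) \<and> i < 4}"

definition dart_lab :: "diagram \<Rightarrow> nat \<times> nat \<Rightarrow> nat" where
  "dart_lab D d = site_lab (fst (sites D ! fst d)) (snd d)"

text \<open>Face tracing for the rotation system: follow the arc to its other end, then
  turn to the next end counterclockwise.\<close>
definition face_rel :: "diagram \<Rightarrow> ((nat \<times> nat) \<times> (nat \<times> nat)) set" where
  "face_rel D = {(d, (fst e, (snd e + 1) mod 4)) | d e.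
      d \<in> darts D \<and> e \<in> darts D \<and> d \<noteq> e \<and> dart_lab D d = dart_lab D e}"

definition num_faces :: "diagram \<Rightarrow> nat" where
  "num_faces D = card (darts D // equiv_cl (face_rel D))"

definition site_adj :: "diagram \<Rightarrow> (nat \<times> nat) set" where
  "site_adj D = {(k, l). k < length (sites D) \<and> l < length (sites D) \<and>
      (\<exists>i j. i < 4 \<and> j < 4 \<and> site_lab (fst (sites D ! k)) i = site_lab (fst (sites D ! l)) j)}"

definition num_site_comps :: "diagram \<Rightarrow> nat" where
  "num_site_comps D = card ({..<length (sites D)} // equiv_cl (site_adj D))"

text \<open>Euler's formula V - E + F = 2 per connected component (E = 2V): the
  projection is a disjoint union of spherical (= planar) 4-valent graphs.\<close>
definition planar_diagram :: "diagram \<Rightarrow> bool" where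
  "planar_diagram D \<longleftrightarrow> num_faces D = length (sites D) + 2 * num_site_comps D"

definition link_diagram :: "diagram \<Rightarrow> bool" where
  "link_diagram D \<longleftrightarrow> wf_diagram D \<and> planar_diagram D \<and>
     (\<forall>k < length (sites D). snd (sites D ! k) \<noteq> Zero)"

definition site_strands :: "site \<Rightarrow> ctype \<Rightarrow> (nat \<times> nat) set" where
  "site_strands x c = (if c = Zero
      then {(site_lab x 0, site_lab x 1), (site_lab x 3, site_lab x 2)}
      else {(site_lab x 0, site_lab x 2), (site_lab x 3, site_lab x 1)})"

definition strand_rel :: "diagram \<Rightarrow> (nat \<times> nat) set" where
  "strand_rel D = (\<Union>(x, c) \<in> set (sites D). site_strands x c)"

definition comps :: "diagram \<Rightarrow> nat set set" where
  "comps D = arcs D // equiv_cl (strand_rel D)"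

definition ncomp :: "diagram \<Rightarrow> nat" where
  "ncomp D = card (comps D)"

definition set_type :: "diagram \<Rightarrow> nat \<Rightarrow> ctype \<Rightarrow> diagram" where
  "set_type D k c = (arcs D, (sites D)[k := (fst (sites D ! k), c)])"

definition crossing_between :: "diagram \<Rightarrow> nat \<Rightarrow> nat set \<Rightarrow> nat set \<Rightarrow> bool" where
  "crossing_between D k K1 K2 \<longleftrightarrow>
     (let x = fst (sites D ! k) in
       (site_lab x 0 \<in> K1 \<and> site_lab x 3 \<in> K2) \<or> (site_lab x 0 \<in> K2 \<and> site_lab x 3 \<in> K1))"

subsection \<open>Kauffman bracket of the sublink consisting of the arcs in K\<close>

definition full_sites :: "diagram \<Rightarrow> nat set \<Rightarrow> nat set" where
  "full_sites D K = {k. k < length (sites D) \<and> snd (sites D ! k) \<noteq> Zero \<and>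
      site_lab (fst (sites D ! k)) 0 \<in> K \<and> site_lab (fst (sites D ! k)) 3 \<in> K}"

text \<open>Arc joinings at a site for the sublink K in a Kauffman state; a is True for
  the A-smoothing.  For a positive crossing the A-smoothing is the oriented one.
  Strands not in K are deleted (the other strand then simply passes through).\<close>
definition site_edges :: "nat set \<Rightarrow> bool \<Rightarrow> site \<Rightarrow> ctype \<Rightarrow> (nat \<times> nat) set" where
  "site_edges K a x c = (let p = site_lab x 0; q = site_lab x 1; r = site_lab x 2; s = site_lab x 3 in
     if c = Zero then {(p, q), (s, r)} \<inter> (K \<times> K)
     else if p \<in> K \<and> s \<in> K then
       (if a = (c = Pos) then {(p, q), (r, s)} else {(p, s), (q, r)})
     else if p \<in> K then {(p, r)}
     else if s \<in> K then {(s, q)}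
     else {})"

definition state_loops :: "diagram \<Rightarrow> nat set \<Rightarrow> nat set \<Rightarrow> nat" where
  "state_loops D K T = card (K // equiv_cl
     (\<Union>k \<in> {..<length (sites D)}. site_edges K (k \<in> T) (fst (sites D ! k)) (snd (sites D ! k))))"

definition bracket :: "diagram \<Rightarrow> nat set \<Rightarrow> real \<Rightarrow> real" where
  "bracket D K A = (\<Sum>T \<in> Pow (full_sites D K).
      A powi (int (card T) - int (card (full_sites D K - T))) *
      (- A\<^sup>2 - A powi (-2)) powi (int (state_loops D K T) - 1))"

definition writhe :: "diagram \<Rightarrow> nat set \<Rightarrow> int" where
  "writhe D K = (\<Sum>k \<in> full_sites D K. if snd (sites D ! k) = Pos then 1 else -1)"

text \<open>Jones polynomial of the sublink K (with m components), in the normalisation of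
  the paper: V(O) = 1, V(empty) = 1/(t^(1/2)+t^(-1/2)),
  t V(L+) - t^(-1) V(L-) = (t^(1/2) - t^(-1/2)) V(L0).  (This equals
  (-1)^(m-1) times the usual Jones polynomial evaluated at 1/t.)\<close>
definition jonesV :: "diagram \<Rightarrow> nat set \<Rightarrow> nat \<Rightarrow> real \<Rightarrow> real" where
  "jonesV D K m t = (let A = t powr (1/4); w = writhe D K in
     (-1) ^ (m + 1) * ((-1) powi w * A powi (-3 * w)) * bracket D K A)"

definition Xinv :: "diagram \<Rightarrow> nat set set \<Rightarrow> real \<Rightarrow> real" where
  "Xinv D C t = jonesV D (\<Union>C) (card C) t /
       (t powr (1/2) + t powr (-1/2)) powi (int (card C) - 1)"

definition Phi :: "diagram \<Rightarrow> real \<Rightarrow> real" where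
  "Phi D t = (if ncomp D = 0 then 0 else
      (\<Sum>C \<in> Pow (comps D). (-1) ^ (ncomp D - card C) * Xinv D C t))"

definition Phi_d :: "diagram \<Rightarrow> nat \<Rightarrow> real" where
  "Phi_d D i = (deriv ^^ i) (Phi D) 1"

definition phi :: "diagram \<Rightarrow> int \<Rightarrow> real" where
  "phi D j = (-2) ^ ncomp D / fact (nat (int (ncomp D) + j)) * Phi_d D (nat (int (ncomp D) + j))"

end

theory Submission
  imports Defs
begin

text \<open>
  If a sublink L' of L misses K1 or K2, the two crossings are not crossings of L' (the strand
  of the missing component is deleted), so L'_{+-} and L'_{-+} agree; likewise the
  smoothed links agree on every sublink that does not contain the merged component
  K1 \<union> K2. Both differences of Phi are therefore signed sums indexed by the same sublinks C of
  L without K1 and K2, completed by K1, K2 respectively by K1 \<union> K2. For each C the skein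
  relation for X, applied at the first crossing of L_{+-} and at the second crossing of
  L_{--}, gives t (X(L_{+-}) - X(L_{-+})) = (t - 1)/(t + 1) (X(L_{0-}) - X(L_{-0})),
  and summing gives the first identity. Differentiating it #L + i times at t = 1 by Leibniz's
  rule gives the recurrence for phi_i.
\<close>

section \<open>Smooth functions on the positive reals\<close>

text \<open>The recursion through \<^term>\<open>deriv f\<close> makes the closure lemmas below provable by
  induction on n.\<close>

fun differentiable_pos_upto :: "nat \<Rightarrow> (real \<Rightarrow> real) \<Rightarrow> bool" where
  "differentiable_pos_upto 0 f \<longleftrightarrow> (\<forall>x>0. f field_differentiable at x)"
| "differentiable_pos_upto (Suc n) f \<longleftrightarrow>
     (\<forall>x>0. f field_differentiable at x) \<and> differentiable_pos_upto n (deriv f)"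

definition smooth_pos :: "(real \<Rightarrow> real) \<Rightarrow> bool" where
  "smooth_pos f \<longleftrightarrow> (\<forall>n. differentiable_pos_upto n f)"

lemma eventually_eq_nhds_pos:
  assumes "(x::real) > 0" and "\<forall>y>0. f y = g y"
  shows "eventually (\<lambda>y. f y = g y) (nhds x)"
proof -
  have "eventually (\<lambda>y. y \<in> {0<..}) (nhds x)"
    using assms(1) by (intro eventually_nhds_in_open) auto
  then show ?thesis using assms(2) by (auto elim: eventually_mono)
qed

lemma field_differentiable_cong_pos:
  assumes "\<forall>y>0. f y = g y" and "(x::real) > 0" and "f field_differentiable at x"
  shows "g field_differentiable at x"
  using assms DERIV_cong_ev[OF refl eventually_eq_nhds_pos refl]
  unfolding field_differentiable_def by blast

lemma deriv_cong_pos: "\<forall>y>0. f y = g y \<Longrightarrow> (x::real) > 0 \<Longrightarrow> deriv f x = deriv g x"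
  by (rule deriv_cong_ev[OF eventually_eq_nhds_pos]) auto

lemma differentiable_pos_upto_cong:
  "\<forall>y>0. f y = g y \<Longrightarrow> differentiable_pos_upto n f \<Longrightarrow> differentiable_pos_upto n g"
proof (induction n arbitrary: f g)
  case 0
  then show ?case using field_differentiable_cong_pos by auto
next
  case (Suc n)
  have "\<forall>y>0. deriv f y = deriv g y" using Suc.prems(1) deriv_cong_pos by blast
  with Suc show ?case using field_differentiable_cong_pos by auto
qed

lemma differentiable_pos_upto_SucD:
  "differentiable_pos_upto (Suc n) f \<Longrightarrow> differentiable_pos_upto n f"
  by (induction n arbitrary: f) auto

lemma differentiable_pos_upto_const: "differentiable_pos_upto n (\<lambda>x. c)"
  by (induction n arbitrary: c) auto

lemma differentiable_pos_upto_add: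
  "differentiable_pos_upto n f \<Longrightarrow> differentiable_pos_upto n g \<Longrightarrow>
   differentiable_pos_upto n (\<lambda>x. f x + g x)"
proof (induction n arbitrary: f g)
  case 0
  then show ?case by (auto intro: field_differentiable_add)
next
  case (Suc n)
  have "differentiable_pos_upto n (\<lambda>x. deriv f x + deriv g x)" using Suc by auto
  moreover have "\<forall>y>0. deriv f y + deriv g y = deriv (\<lambda>x. f x + g x) y"
    using Suc.prems by simp
  ultimately show ?case
    using Suc.prems by (auto intro: field_differentiable_add differentiable_pos_upto_cong)
qed

lemma differentiable_pos_upto_mult:
  "differentiable_pos_upto n f \<Longrightarrow> differentiable_pos_upto n g \<Longrightarrow>
   differentiable_pos_upto n (\<lambda>x. f x * g x)"
proof (induction n arbitrary: f g)
  case 0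
  then show ?case by (auto intro: field_differentiable_mult)
next
  case (Suc n)
  have "differentiable_pos_upto n (\<lambda>x. f x * deriv g x)"
    and "differentiable_pos_upto n (\<lambda>x. deriv f x * g x)"
    using Suc differentiable_pos_upto_SucD by auto
  then have "differentiable_pos_upto n (\<lambda>x. f x * deriv g x + deriv f x * g x)"
    by (rule differentiable_pos_upto_add)
  moreover have "\<forall>y>0. f y * deriv g y + deriv f y * g y = deriv (\<lambda>x. f x * g x) y"
    using Suc.prems by simp
  ultimately show ?case
    using Suc.prems by (auto intro: field_differentiable_mult differentiable_pos_upto_cong)
qed

lemma smooth_pos_const: "smooth_pos (\<lambda>x. c)"
  by (simp add: smooth_pos_def differentiable_pos_upto_const)

lemma smooth_pos_add: "smooth_pos f \<Longrightarrow> smooth_pos g \<Longrightarrow> smooth_pos (\<lambda>x. f x + g x)"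
  by (simp add: smooth_pos_def differentiable_pos_upto_add)

lemma smooth_pos_mult: "smooth_pos f \<Longrightarrow> smooth_pos g \<Longrightarrow> smooth_pos (\<lambda>x. f x * g x)"
  by (simp add: smooth_pos_def differentiable_pos_upto_mult)

lemma smooth_pos_uminus: "smooth_pos f \<Longrightarrow> smooth_pos (\<lambda>x. - f x)"
  using smooth_pos_mult[OF smooth_pos_const[of "-1"]] by simp

lemma smooth_pos_diff: "smooth_pos f \<Longrightarrow> smooth_pos g \<Longrightarrow> smooth_pos (\<lambda>x. f x - g x)"
  using smooth_pos_add[OF _ smooth_pos_uminus, of f g] by simp

lemma smooth_pos_sum:
  "finite A \<Longrightarrow> (\<And>a. a \<in> A \<Longrightarrow> smooth_pos (f a)) \<Longrightarrow> smooth_pos (\<lambda>x. \<Sum>a\<in>A. f a x)"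
  by (induction A rule: finite_induct) (auto intro: smooth_pos_const smooth_pos_add)

lemma smooth_pos_power: "smooth_pos f \<Longrightarrow> smooth_pos (\<lambda>x. f x ^ n)"
  by (induction n) (auto intro: smooth_pos_const smooth_pos_mult)

lemma smooth_pos_deriv: "smooth_pos f \<Longrightarrow> smooth_pos (deriv f)"
  by (simp add: smooth_pos_def) (metis differentiable_pos_upto.simps(2))

lemma smooth_pos_field_differentiable:
  "smooth_pos f \<Longrightarrow> x > 0 \<Longrightarrow> f field_differentiable at x"
  by (simp add: smooth_pos_def) (metis differentiable_pos_upto.simps(1))

lemma smooth_pos_inverse:
  assumes f: "smooth_pos f" and nz: "\<forall>x>0. f x \<noteq> 0"
  shows "smooth_pos (\<lambda>x. inverse (f x))"
  unfolding smooth_pos_def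
proof
  fix n show "differentiable_pos_upto n (\<lambda>x. inverse (f x))"
  proof (induction n)
    case 0
    then show ?case
      using f nz smooth_pos_field_differentiable by (auto intro: field_differentiable_inverse)
  next
    case (Suc n)
    have "differentiable_pos_upto n (deriv f)"
      using f smooth_pos_deriv smooth_pos_def by blast
    then have "differentiable_pos_upto n (\<lambda>x. (- 1) * deriv f x * (inverse (f x) * inverse (f x)))"
      using Suc.IH by (intro differentiable_pos_upto_mult differentiable_pos_upto_const) auto
    moreover have "\<forall>y>0. (- 1) * deriv f y * (inverse (f y) * inverse (f y))
                       = deriv (\<lambda>x. inverse (f x)) y"
      using f nz smooth_pos_field_differentiable by (auto simp: field_simps power2_eq_square)
    ultimately have "differentiable_pos_upto n (deriv (\<lambda>x. inverse (f x)))"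
      by (rule differentiable_pos_upto_cong[rotated])
    then show ?case
      using f nz smooth_pos_field_differentiable by (auto intro: field_differentiable_inverse)
  qed
qed

lemma smooth_pos_powi:
  "smooth_pos f \<Longrightarrow> \<forall>x>0. f x \<noteq> 0 \<Longrightarrow> smooth_pos (\<lambda>x. f x powi k)"
  unfolding power_int_def
  by (cases "k \<ge> 0") (auto intro: smooth_pos_power smooth_pos_inverse simp: power_inverse[symmetric])

lemma smooth_pos_divide:
  "smooth_pos f \<Longrightarrow> smooth_pos g \<Longrightarrow> \<forall>x>0. g x \<noteq> 0 \<Longrightarrow> smooth_pos (\<lambda>x. f x / g x)"
  by (simp add: divide_inverse smooth_pos_mult smooth_pos_inverse)

lemma smooth_pos_powr: "smooth_pos (\<lambda>x. x powr a)"
  unfolding smooth_pos_def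
proof
  fix n show "differentiable_pos_upto n (\<lambda>x. x powr a)"
  proof (induction n arbitrary: a)
    case 0
    then show ?case by (auto intro!: derivative_eq_intros simp: field_differentiable_def)
  next
    case (Suc n)
    have "differentiable_pos_upto n (\<lambda>x. a * x powr (a - 1))"
      by (intro differentiable_pos_upto_mult differentiable_pos_upto_const Suc.IH)
    moreover have "\<forall>y>0. a * y powr (a - 1) = deriv (\<lambda>x. x powr a) y"
      by (auto intro!: DERIV_imp_deriv[symmetric] derivative_eq_intros)
    ultimately show ?case
      by (auto intro!: derivative_eq_intros simp: field_differentiable_def
          intro: differentiable_pos_upto_cong)
  qed
qed

lemma higher_deriv_has_field_derivative:
  assumes "smooth_pos f" and "x > 0"
  shows "((deriv ^^ n) f has_field_derivative (deriv ^^ Suc n) f x) (at x)"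
proof -
  have "smooth_pos ((deriv ^^ n) f)"
    using assms(1) by (induction n) (auto intro: smooth_pos_deriv)
  then show ?thesis
    using assms(2) smooth_pos_field_differentiable
    by (simp add: DERIV_deriv_iff_field_differentiable)
qed

lemma higher_deriv_diff_pos:
  assumes f: "smooth_pos f" and g: "smooth_pos g" and x: "x > 0"
  shows "(deriv ^^ n) (\<lambda>t. f t - g t) x = (deriv ^^ n) f x - (deriv ^^ n) g x"
  using x
proof (induction n arbitrary: x)
  case 0
  then show ?case by simp
next
  case (Suc n)
  have "(deriv ^^ Suc n) (\<lambda>t. f t - g t) x = deriv (\<lambda>y. (deriv ^^ n) f y - (deriv ^^ n) g y) x"
    using Suc by (auto intro: deriv_cong_pos)
  also have "\<dots> = (deriv ^^ Suc n) f x - (deriv ^^ Suc n) g x"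
    using higher_deriv_has_field_derivative[OF f Suc.prems]
      higher_deriv_has_field_derivative[OF g Suc.prems]
    by (intro DERIV_imp_deriv derivative_intros)
  finally show ?case .
qed

lemma higher_deriv_quadratic_mult:
  fixes a b c :: real
  assumes F: "smooth_pos F" and x: "x > 0"
  shows "(deriv ^^ n) (\<lambda>t. (a * t\<^sup>2 + b * t + c) * F t) x =
     (a * x\<^sup>2 + b * x + c) * (deriv ^^ n) F x + real n * (2 * a * x + b) * (deriv ^^ (n - 1)) F x
     + a * real n * (real n - 1) * (deriv ^^ (n - 2)) F x"
  using x
proof (induction n arbitrary: x)
  case 0
  then show ?case by simp
next
  case (Suc n)
  let ?d = "\<lambda>k. (deriv ^^ k) F"
  have "(deriv ^^ Suc n) (\<lambda>t. (a * t\<^sup>2 + b * t + c) * F t) x =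
      deriv (\<lambda>y. (a * y\<^sup>2 + b * y + c) * ?d n y + real n * (2 * a * y + b) * ?d (n - 1) y
                 + a * real n * (real n - 1) * ?d (n - 2) y) x"
    using Suc by (auto intro: deriv_cong_pos)
  also have "\<dots> = (2 * a * x + b) * ?d n x + (a * x\<^sup>2 + b * x + c) * ?d (Suc n) x
      + real n * (2 * a) * ?d (n - 1) x + real n * (2 * a * x + b) * ?d (Suc (n - 1)) x
      + a * real n * (real n - 1) * ?d (Suc (n - 2)) x"
    by (rule DERIV_imp_deriv)
      (auto intro!: derivative_eq_intros higher_deriv_has_field_derivative[OF F Suc.prems]
        simp: algebra_simps)
  also have "\<dots> = (a * x\<^sup>2 + b * x + c) * ?d (Suc n) x
      + real (Suc n) * (2 * a * x + b) * ?d (Suc n - 1) x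
      + a * real (Suc n) * (real (Suc n) - 1) * ?d (Suc n - 2) x"
    by (cases n; cases "n - 1") (auto simp: algebra_simps)
  finally show ?case .
qed

section \<open>Strands and components\<close>

abbreviation lab :: "diagram \<Rightarrow> nat \<Rightarrow> nat \<Rightarrow> nat" where
  "lab D j i \<equiv> site_lab (fst (sites D ! j)) i"

lemma arcs_set_type [simp]: "arcs (set_type D k c) = arcs D"
  by (simp add: set_type_def arcs_def)

lemma length_sites_set_type [simp]: "length (sites (set_type D k c)) = length (sites D)"
  by (simp add: set_type_def sites_def)

lemma nth_sites_set_type:
  "k < length (sites D) \<Longrightarrow>
   sites (set_type D k c) ! j = (if j = k then (fst (sites D ! k), c) else sites D ! j)"
  by (simp add: set_type_def sites_def nth_list_update)

lemma fst_nth_sites_set_type [simp]: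
  "k < length (sites D) \<Longrightarrow> fst (sites (set_type D k c) ! j) = fst (sites D ! j)"
  by (simp add: nth_sites_set_type)

lemma snd_nth_sites_set_type:
  "k < length (sites D) \<Longrightarrow> snd (sites (set_type D k c) ! j) = (if j = k then c else snd (sites D ! j))"
  by (simp add: nth_sites_set_type)

lemma set_type_id: "k < length (sites D) \<Longrightarrow> snd (sites D ! k) = c \<Longrightarrow> set_type D k c = D"
  unfolding set_type_def sites_def arcs_def by (metis list_update_id prod.collapse)

lemma map_sites_set_type:
  assumes "k < length (sites D)" and "\<And>x c c'. f (x, c) = f (x, c')"
  shows "map f (sites (set_type D k c)) = map f (sites D)"
proof (rule nth_equalityI)
  fix j assume "j < length (map f (sites (set_type D k c)))"
  then show "map f (sites (set_type D k c)) ! j = map f (sites D) ! j"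
    using assms(2)[of "fst (sites D ! k)" c "snd (sites D ! k)"]
    by (simp add: nth_sites_set_type[OF assms(1)])
qed simp

lemma in_ends_set_type [simp]: "k < length (sites D) \<Longrightarrow> in_ends (set_type D k c) = in_ends D"
  unfolding in_ends_def by (subst map_sites_set_type) auto

lemma out_ends_set_type [simp]: "k < length (sites D) \<Longrightarrow> out_ends (set_type D k c) = out_ends D"
  unfolding out_ends_def by (subst map_sites_set_type) auto

lemma wf_diagram_set_type [simp]:
  "k < length (sites D) \<Longrightarrow> wf_diagram (set_type D k c) \<longleftrightarrow> wf_diagram D"
  by (simp add: wf_diagram_def)

lemma crossing_between_set_type [simp]:
  "k < length (sites D) \<Longrightarrow> crossing_between (set_type D k c) j K1 K2 \<longleftrightarrow> crossing_between D j K1 K2"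
  by (simp add: crossing_between_def)

lemma equiv_equiv_cl: "equiv UNIV (equiv_cl R)"
  unfolding equiv_cl_def
  by (intro equivI refl_rtrancl sym_rtrancl trans_rtrancl sym_Un_converse) auto

lemma equiv_cl_refl [simp]: "(x, x) \<in> equiv_cl R"
  by (simp add: equiv_cl_def)

lemma equiv_cl_sym: "(x, y) \<in> equiv_cl R \<Longrightarrow> (y, x) \<in> equiv_cl R"
  using equiv_equiv_cl by (metis equivE symD)

lemma equiv_cl_trans: "(x, y) \<in> equiv_cl R \<Longrightarrow> (y, z) \<in> equiv_cl R \<Longrightarrow> (x, z) \<in> equiv_cl R"
  unfolding equiv_cl_def by (rule rtrancl_trans)

lemma r_into_equiv_cl: "(x, y) \<in> R \<Longrightarrow> (x, y) \<in> equiv_cl R"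
  unfolding equiv_cl_def by auto

lemma equiv_cl_subset:
  assumes "R \<subseteq> equiv_cl S"
  shows "equiv_cl R \<subseteq> equiv_cl S"
proof -
  have "R \<union> R\<inverse> \<subseteq> equiv_cl S" using assms by (auto intro: equiv_cl_sym)
  then show ?thesis unfolding equiv_cl_def[of R] by (simp add: equiv_cl_def rtrancl_subset_rtrancl)
qed

lemma equiv_cl_class_eq: "(x, y) \<in> equiv_cl R \<Longrightarrow> equiv_cl R `` {x} = equiv_cl R `` {y}"
  by (rule equiv_class_eq[OF equiv_equiv_cl])

lemma quotient_equiv_cl_class:
  assumes "X \<in> A // equiv_cl R" and "x \<in> X"
  shows "X = equiv_cl R `` {x}"
proof -
  obtain y where "X = equiv_cl R `` {y}" using assms(1) by (auto elim: quotientE)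
  then show ?thesis using assms(2) equiv_cl_class_eq[of y x R] by simp
qed

lemma equiv_cl_insert:
  "equiv_cl (insert (a, b) R) = equiv_cl R \<union>
     (equiv_cl R `` {a} \<union> equiv_cl R `` {b}) \<times> (equiv_cl R `` {a} \<union> equiv_cl R `` {b})"
  (is "?L = ?E \<union> ?B \<times> ?B")
proof
  have E: "?E \<subseteq> ?L" by (rule equiv_cl_subset) (auto intro: r_into_equiv_cl)
  have ab: "(a, b) \<in> ?L" by (rule r_into_equiv_cl) simp
  have "(u, v) \<in> ?L" if "u \<in> ?B" "v \<in> ?B" for u v
  proof -
    have "(u, a) \<in> ?L \<or> (u, b) \<in> ?L" and "(a, v) \<in> ?L \<or> (b, v) \<in> ?L"
      using that E by (auto intro: equiv_cl_sym)
    then show ?thesis using ab by (meson equiv_cl_sym equiv_cl_trans)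
  qed
  then show "?E \<union> ?B \<times> ?B \<subseteq> ?L" using E by auto
next
  have "(x, y) \<in> ?E \<union> ?B \<times> ?B" if "(x, y) \<in> (insert (a, b) R \<union> (insert (a, b) R)\<inverse>)\<^sup>*" for x y
    using that
  proof (induction rule: rtrancl_induct)
    case base
    then show ?case by simp
  next
    case (step y z)
    have "(y, z) \<in> ?E \<or> (y, z) \<in> ?B \<times> ?B"
      using step(2) by (auto intro: r_into_equiv_cl equiv_cl_sym)
    with step(3) show ?case
      by (elim disjE) (auto intro: equiv_cl_trans equiv_cl_sym simp: Image_iff)
  qed
  then show "?L \<subseteq> ?E \<union> ?B \<times> ?B" by (auto simp: equiv_cl_def)
qed

lemma quotient_equiv_cl_insert:
  assumes "a \<in> A"
  shows "A // equiv_cl (insert (a, b) R) =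
    insert (equiv_cl R `` {a} \<union> equiv_cl R `` {b})
      (A // equiv_cl R - {equiv_cl R `` {a}, equiv_cl R `` {b}})"
proof -
  let ?E = "equiv_cl R" let ?B = "?E `` {a} \<union> ?E `` {b}"
  have same_class: "?E `` {x} = ?E `` {a} \<or> ?E `` {x} = ?E `` {b} \<longleftrightarrow> x \<in> ?B" for x
  proof
    assume "?E `` {x} = ?E `` {a} \<or> ?E `` {x} = ?E `` {b}"
    moreover have "x \<in> ?E `` {x}" by simp
    ultimately show "x \<in> ?B" by blast
  next
    assume "x \<in> ?B"
    then show "?E `` {x} = ?E `` {a} \<or> ?E `` {x} = ?E `` {b}"
      by (auto dest: equiv_cl_class_eq)
  qed
  have merged_class: "equiv_cl (insert (a, b) R) `` {x} = (if x \<in> ?B then ?B else ?E `` {x})" for x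
  proof (cases "x \<in> ?B")
    case True
    then have "?E `` {x} = ?E `` {a} \<or> ?E `` {x} = ?E `` {b}"
      using same_class by blast
    then show ?thesis using True unfolding equiv_cl_insert by auto
  next
    case False
    then show ?thesis unfolding equiv_cl_insert by auto
  qed
  have quot: "A // r = (\<lambda>x. r `` {x}) ` A" for r :: "('a \<times> 'a) set"
    by (auto simp: quotient_def)
  have "A // equiv_cl (insert (a, b) R) = (\<lambda>x. if x \<in> ?B then ?B else ?E `` {x}) ` A"
    unfolding quot merged_class ..
  also have "\<dots> = insert ?B ((\<lambda>x. ?E `` {x}) ` (A - ?B))"
    using assms by auto
  also have "(\<lambda>x. ?E `` {x}) ` (A - ?B) = A // ?E - {?E `` {a}, ?E `` {b}}"
    unfolding quot using same_class by blast
  finally show ?thesis .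
qed

lemma distinct_iff_count_list_le_1: "distinct xs \<longleftrightarrow> (\<forall>a. count_list xs a \<le> 1)"
  by (metis One_nat_def count_mset distinct_count_atmost_1 bot_nat_0.extremum count_mset_0_iff
      le_antisym le_zero_eq less_one linorder_not_le)

lemma mset_in_ends_eq_out_ends: "wf_diagram D \<Longrightarrow> mset (in_ends D) = mset (out_ends D)"
  by (simp add: wf_diagram_def multiset_eq_iff count_mset)

lemma distinct_in_ends: "wf_diagram D \<Longrightarrow> distinct (in_ends D)"
  unfolding wf_diagram_def distinct_iff_count_list_le_1 by blast

lemma distinct_out_ends: "wf_diagram D \<Longrightarrow> distinct (out_ends D)"
  by (metis distinct_in_ends mset_in_ends_eq_out_ends mset_eq_imp_distinct_iff)

lemma set_out_ends_eq_in_ends: "wf_diagram D \<Longrightarrow> set (out_ends D) = set (in_ends D)"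
  by (metis mset_in_ends_eq_out_ends mset_eq_setD)

lemma set_sites: "set (sites D) = (\<lambda>j. sites D ! j) ` {..<length (sites D)}"
  unfolding set_conv_nth by auto

lemma set_in_ends: "set (in_ends D) = (\<Union>j<length (sites D). {lab D j 0, lab D j 3})"
  by (simp add: in_ends_def split_def set_sites)

lemma set_out_ends: "set (out_ends D) = (\<Union>j<length (sites D). {lab D j 1, lab D j 2})"
  by (simp add: out_ends_def split_def set_sites)

lemma distinct_concat_pairs:
  assumes "distinct (concat (map (\<lambda>y. [f y, g y]) xs))" and i: "i < length xs" and j: "j < length xs"
  shows "f (xs ! i) = f (xs ! j) \<longleftrightarrow> i = j" and "g (xs ! i) = g (xs ! j) \<longleftrightarrow> i = j"
    and "f (xs ! i) \<noteq> g (xs ! j)"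
proof -
  let ?h = "\<lambda>y. [f y, g y]"
  have "[] \<notin> set (map ?h xs)" by auto
  then have d: "distinct (map ?h xs)" and pair: "\<And>y. y \<in> set xs \<Longrightarrow> f y \<noteq> g y"
    and disj: "\<And>ys zs. ys \<in> set (map ?h xs) \<Longrightarrow> zs \<in> set (map ?h xs) \<Longrightarrow> ys \<noteq> zs \<Longrightarrow>
                 set ys \<inter> set zs = {}"
    using assms(1) unfolding distinct_concat_iff by auto
  have "{f (xs ! i), g (xs ! i)} \<inter> {f (xs ! j), g (xs ! j)} = {}" if "i \<noteq> j"
  proof -
    have "?h (xs ! i) \<noteq> ?h (xs ! j)" using nth_eq_iff_index_eq[OF d, of i j] i j that by simp
    then show ?thesis using disj[of "?h (xs ! i)" "?h (xs ! j)"] i j by auto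
  qed
  moreover have "f (xs ! i) \<noteq> g (xs ! i)" using pair i by simp
  ultimately show "f (xs ! i) = f (xs ! j) \<longleftrightarrow> i = j" and "g (xs ! i) = g (xs ! j) \<longleftrightarrow> i = j"
    and "f (xs ! i) \<noteq> g (xs ! j)"
    by (cases "i = j"; auto)+
qed

lemma in_end_labels_inj:
  assumes "wf_diagram D" and "j < length (sites D)" and "j' < length (sites D)"
  shows "lab D j 0 = lab D j' 0 \<longleftrightarrow> j = j'" and "lab D j 3 = lab D j' 3 \<longleftrightarrow> j = j'"
    and "lab D j 0 \<noteq> lab D j' 3"
  using distinct_concat_pairs[OF _ assms(2,3), of "\<lambda>y. site_lab (fst y) 0" "\<lambda>y. site_lab (fst y) 3"]
    distinct_in_ends[OF assms(1)]
  by (simp_all add: in_ends_def split_def)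

lemma out_end_labels_inj:
  assumes "wf_diagram D" and "j < length (sites D)" and "j' < length (sites D)"
  shows "lab D j 1 = lab D j' 1 \<longleftrightarrow> j = j'" and "lab D j 2 = lab D j' 2 \<longleftrightarrow> j = j'"
    and "lab D j 1 \<noteq> lab D j' 2"
  using distinct_concat_pairs[OF _ assms(2,3), of "\<lambda>y. site_lab (fst y) 1" "\<lambda>y. site_lab (fst y) 2"]
    distinct_out_ends[OF assms(1)]
  by (simp_all add: out_ends_def split_def)

lemma strand_rel_nth:
  "strand_rel D = (\<Union>j<length (sites D). site_strands (fst (sites D ! j)) (snd (sites D ! j)))"
  unfolding strand_rel_def by (auto simp: set_conv_nth split_def)

lemma strand_rel_iff:
  "(a, b) \<in> strand_rel D \<longleftrightarrow> (\<exists>j<length (sites D).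
     (a = lab D j 0 \<and> b = lab D j (if snd (sites D ! j) = Zero then 1 else 2)) \<or>
     (a = lab D j 3 \<and> b = lab D j (if snd (sites D ! j) = Zero then 2 else 1)))"
  by (auto simp: strand_rel_nth site_strands_def)

lemma strand_rel_functional:
  assumes wf: "wf_diagram D" and "(a, b) \<in> strand_rel D" and "(a, b') \<in> strand_rel D"
  shows "b = b'"
proof -
  obtain j j' where j: "j < length (sites D)" and j': "j' < length (sites D)" and
    "(a = lab D j 0 \<and> b = lab D j (if snd (sites D ! j) = Zero then 1 else 2)) \<or>
     (a = lab D j 3 \<and> b = lab D j (if snd (sites D ! j) = Zero then 2 else 1))"
    "(a = lab D j' 0 \<and> b' = lab D j' (if snd (sites D ! j') = Zero then 1 else 2)) \<or>
     (a = lab D j' 3 \<and> b' = lab D j' (if snd (sites D ! j') = Zero then 2 else 1))"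
    using assms(2,3) unfolding strand_rel_iff by blast
  then show ?thesis using in_end_labels_inj[OF wf j j'] in_end_labels_inj[OF wf j' j] by auto
qed

lemma strand_rel_injective:
  assumes wf: "wf_diagram D" and "(a, b) \<in> strand_rel D" and "(a', b) \<in> strand_rel D"
  shows "a = a'"
proof -
  obtain j j' where j: "j < length (sites D)" and j': "j' < length (sites D)" and
    "(a = lab D j 0 \<and> b = lab D j (if snd (sites D ! j) = Zero then 1 else 2)) \<or>
     (a = lab D j 3 \<and> b = lab D j (if snd (sites D ! j) = Zero then 2 else 1))"
    "(a' = lab D j' 0 \<and> b = lab D j' (if snd (sites D ! j') = Zero then 1 else 2)) \<or>
     (a' = lab D j' 3 \<and> b = lab D j' (if snd (sites D ! j') = Zero then 2 else 1))"
    using assms(2,3) unfolding strand_rel_iff by blast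
  then show ?thesis
    using out_end_labels_inj[OF wf j j'] out_end_labels_inj[OF wf j' j]
    by (cases "snd (sites D ! j) = Zero"; cases "snd (sites D ! j') = Zero") auto
qed

lemma strand_rel_permutation:
  assumes wf: "wf_diagram D"
  obtains f where "strand_rel D = (\<lambda>u. (u, f u)) ` set (in_ends D)"
    and "f ` set (in_ends D) \<subseteq> set (in_ends D)" and "inj_on f (set (in_ends D))"
proof -
  let ?R = "strand_rel D" and ?S = "set (in_ends D)"
  have dom: "\<exists>b. (a, b) \<in> ?R" if "a \<in> ?S" for a
    using that unfolding set_in_ends strand_rel_iff by blast
  have ran: "a \<in> ?S \<and> b \<in> ?S" if "(a, b) \<in> ?R" for a b
    using that set_out_ends_eq_in_ends[OF wf] unfolding set_in_ends set_out_ends strand_rel_iff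
    by (auto split: if_splits)
  define f where "f a = (THE b. (a, b) \<in> ?R)" for a
  have f: "f a = b" if "(a, b) \<in> ?R" for a b
    unfolding f_def using that strand_rel_functional[OF wf] by blast
  have graph: "?R = (\<lambda>u. (u, f u)) ` ?S"
  proof (intro set_eqI iffI)
    fix x assume "x \<in> ?R"
    then show "x \<in> (\<lambda>u. (u, f u)) ` ?S" using ran f by (cases x) auto
  next
    fix x assume "x \<in> (\<lambda>u. (u, f u)) ` ?S"
    then obtain u where "u \<in> ?S" and "x = (u, f u)" by blast
    then show "x \<in> ?R" using dom f by blast
  qed
  moreover have "f ` ?S \<subseteq> ?S"
  proof (rule image_subsetI)
    fix u assume "u \<in> ?S"
    then have "(u, f u) \<in> ?R" using graph by blast
    then show "f u \<in> ?S" using ran by blast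
  qed
  moreover have "inj_on f ?S"
  proof (rule inj_onI)
    fix u v assume "u \<in> ?S" "v \<in> ?S" "f u = f v"
    then have "(u, f u) \<in> ?R" and "(v, f u) \<in> ?R" using graph by auto
    then show "u = v" using strand_rel_injective[OF wf] by blast
  qed
  ultimately show thesis by (rule that)
qed

lemma funpow_returns_finite:
  assumes "finite S" and "f ` S \<subseteq> S" and "inj_on f S" and "a \<in> S"
  obtains n where "n > 0" and "(f ^^ n) a = a"
proof -
  define g where "g u = (if u \<in> S then f u else u)" for u
  have "inj g" using assms(2,3) unfolding g_def inj_def inj_on_def by (metis image_subset_iff)
  have g_pow: "(g ^^ n) a = (f ^^ n) a \<and> (f ^^ n) a \<in> S" for n
    using assms(2,4) by (induction n) (auto simp: g_def)
  have "finite {y. \<exists>n. y = (g ^^ n) a}" using g_pow by (intro finite_subset[OF _ assms(1)]) auto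
  then obtain n where "n > 0" "(g ^^ n) a = a" using funpow_inj_finite[OF \<open>inj g\<close>] by blast
  then show thesis using that g_pow by metis
qed

lemma cycle_connects_successor:
  assumes fin: "finite S" and fS: "f ` S \<subseteq> S" and inj: "inj_on f S" and a: "a \<in> S"
    and edges: "\<And>u. u \<in> S \<Longrightarrow> (a, u) \<in> equiv_cl ((\<lambda>v. (v, f v)) ` S) \<Longrightarrow> u \<noteq> a \<Longrightarrow> (u, f u) \<in> R"
  shows "(f a, a) \<in> equiv_cl R"
proof -
  let ?G = "(\<lambda>v. (v, f v)) ` S"
  obtain n where n: "n > 0" "(f ^^ n) a = a" using funpow_returns_finite[OF fin fS inj a] .
  have orbit: "(f ^^ m) a \<in> S" for m using fS a by (induction m) auto
  have "(a, (f ^^ m) a) \<in> equiv_cl ?G \<and> (f a, (f ^^ m) a) \<in> equiv_cl R" if "m > 0" for m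
    using that
  proof (induction m rule: nat_induct_non_zero)
    case 1
    then show ?case using a by (auto intro: r_into_equiv_cl)
  next
    case (Suc m)
    let ?u = "(f ^^ m) a"
    have "(?u, f ?u) \<in> ?G" using orbit by auto
    moreover have "?u \<noteq> a \<Longrightarrow> (?u, f ?u) \<in> R" using edges orbit Suc.IH by blast
    ultimately show ?case
      using Suc.IH by (cases "?u = a") (auto intro: equiv_cl_trans r_into_equiv_cl)
  qed
  then show ?thesis using n by metis
qed

lemma site_strands_crossing:
  "c \<noteq> Zero \<Longrightarrow> site_strands x c = {(site_lab x 0, site_lab x 2), (site_lab x 3, site_lab x 1)}"
  by (simp add: site_strands_def)

lemma strand_rel_set_type:
  assumes "k < length (sites D)"
  shows "strand_rel (set_type D k c) = site_strands (fst (sites D ! k)) c \<union>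
           (\<Union>j\<in>{..<length (sites D)} - {k}. site_strands (fst (sites D ! j)) (snd (sites D ! j)))"
proof -
  let ?st = "\<lambda>E j. site_strands (fst (sites E ! j)) (snd (sites E ! j))"
  have "strand_rel (set_type D k c) = (\<Union>j\<in>insert k ({..<length (sites D)} - {k}). ?st (set_type D k c) j)"
    using assms by (simp add: strand_rel_nth insert_absorb)
  also have "\<dots> = ?st (set_type D k c) k \<union> (\<Union>j\<in>{..<length (sites D)} - {k}. ?st (set_type D k c) j)"
    by (rule UN_insert)
  also have "(\<Union>j\<in>{..<length (sites D)} - {k}. ?st (set_type D k c) j)
           = (\<Union>j\<in>{..<length (sites D)} - {k}. ?st D j)"
    using assms by (intro SUP_cong) (auto simp: nth_sites_set_type)
  finally show ?thesis using assms by (simp add: nth_sites_set_type)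
qed

lemma comps_set_type_crossing:
  assumes "k < length (sites D)" and "c \<noteq> Zero" and "snd (sites D ! k) \<noteq> Zero"
  shows "comps (set_type D k c) = comps D"
proof -
  have "strand_rel (set_type D k c) = strand_rel (set_type D k (snd (sites D ! k)))"
    using assms by (simp add: strand_rel_set_type site_strands_crossing)
  then show ?thesis using assms(1) by (simp add: comps_def set_type_id)
qed

lemma crossing_strand_labels:
  assumes k: "k < length (sites D)" and ck: "snd (sites D ! k) \<noteq> Zero"
    and K1: "K1 \<in> comps D" and K2: "K2 \<in> comps D"
    and p: "lab D k 0 \<in> K1" and s: "lab D k 3 \<in> K2"
  shows "lab D k 2 \<in> K1" and "lab D k 1 \<in> K2"
proof -
  have "site_strands (fst (sites D ! k)) (snd (sites D ! k)) \<subseteq> strand_rel D"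
    using k unfolding strand_rel_nth by blast
  then have "(lab D k 0, lab D k 2) \<in> strand_rel D" and "(lab D k 3, lab D k 1) \<in> strand_rel D"
    using ck by (simp_all add: site_strands_crossing)
  moreover have "K1 = equiv_cl (strand_rel D) `` {lab D k 0}"
    and "K2 = equiv_cl (strand_rel D) `` {lab D k 3}"
    using quotient_equiv_cl_class[OF K1[unfolded comps_def] p]
      quotient_equiv_cl_class[OF K2[unfolded comps_def] s] .
  ultimately show "lab D k 2 \<in> K1" and "lab D k 1 \<in> K2"
    by (simp_all add: r_into_equiv_cl)
qed

lemma crossing_between_labels:
  assumes k: "k < length (sites D)" and ck: "snd (sites D ! k) \<noteq> Zero"
    and K1: "K1 \<in> comps D" and K2: "K2 \<in> comps D" and cr: "crossing_between D k K1 K2"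
    and i: "i < 4"
  shows "lab D k i \<in> K1 \<union> K2"
proof -
  from cr consider "lab D k 0 \<in> K1" "lab D k 3 \<in> K2" | "lab D k 0 \<in> K2" "lab D k 3 \<in> K1"
    unfolding crossing_between_def Let_def by blast
  then have "\<forall>i\<in>{0, 1, 2, 3}. lab D k i \<in> K1 \<union> K2"
  proof cases
    case 1
    then show ?thesis using crossing_strand_labels[OF k ck K1 K2] by blast
  next
    case 2
    then show ?thesis using crossing_strand_labels[OF k ck K2 K1] by blast
  qed
  moreover have "i \<in> {0, 1, 2, 3}" using i by auto
  ultimately show ?thesis by blast
qed

lemma strand_rel_smoothing_split:
  assumes k: "k < length (sites D)" and ck: "snd (sites D ! k) \<noteq> Zero"
  obtains Rest where "strand_rel D = {(lab D k 0, lab D k 2), (lab D k 3, lab D k 1)} \<union> Rest"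
    and "strand_rel (set_type D k Zero) = {(lab D k 0, lab D k 1), (lab D k 3, lab D k 2)} \<union> Rest"
proof
  let ?Rest = "\<Union>j\<in>{..<length (sites D)} - {k}. site_strands (fst (sites D ! j)) (snd (sites D ! j))"
  have "strand_rel D = strand_rel (set_type D k (snd (sites D ! k)))" by (simp add: set_type_id[OF k])
  then show "strand_rel D = {(lab D k 0, lab D k 2), (lab D k 3, lab D k 1)} \<union> ?Rest"
    using ck by (simp add: strand_rel_set_type[OF k] site_strands_crossing)
  show "strand_rel (set_type D k Zero) = {(lab D k 0, lab D k 1), (lab D k 3, lab D k 2)} \<union> ?Rest"
    by (simp add: strand_rel_set_type[OF k] site_strands_def)
qed

text \<open>Each component is a cycle of the strand permutation. After smoothing a crossing with a
  different component, the rest of that cycle still joins the end of each of the two strands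
  through the crossing back to its beginning.\<close>

lemma smoothing_keeps_strands_connected:
  assumes wf: "wf_diagram D" and k: "k < length (sites D)" and ck: "snd (sites D ! k) \<noteq> Zero"
    and K1: "K1 \<in> comps D" and K2: "K2 \<in> comps D" and ne: "K1 \<noteq> K2"
    and pK1: "lab D k 0 \<in> K1" and sK2: "lab D k 3 \<in> K2"
  shows "(lab D k 2, lab D k 0) \<in> equiv_cl (strand_rel (set_type D k Zero))"
    and "(lab D k 1, lab D k 3) \<in> equiv_cl (strand_rel (set_type D k Zero))"
proof -
  define p q r s where "p = lab D k 0" and "q = lab D k 1" and "r = lab D k 2" and "s = lab D k 3"
  let ?R = "strand_rel D"
  let ?R' = "strand_rel (set_type D k Zero)"
  let ?S = "set (in_ends D)"
  obtain Rest where R: "?R = {(p, r), (s, q)} \<union> Rest" and R0: "?R' = {(p, q), (s, r)} \<union> Rest"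
    using strand_rel_smoothing_split[OF k ck] unfolding p_def q_def r_def s_def .
  have "K1 = equiv_cl ?R `` {p}" and "K2 = equiv_cl ?R `` {s}"
    using quotient_equiv_cl_class[OF K1[unfolded comps_def] pK1]
      quotient_equiv_cl_class[OF K2[unfolded comps_def] sK2] by (simp_all add: p_def s_def)
  then have ps: "(p, s) \<notin> equiv_cl ?R"
    using ne by (metis equiv_cl_class_eq)
  obtain f where graph: "?R = (\<lambda>u. (u, f u)) ` ?S" and fS: "f ` ?S \<subseteq> ?S" and inj: "inj_on f ?S"
    using strand_rel_permutation[OF wf] .
  have pS: "p \<in> ?S" and sS: "s \<in> ?S" using k by (auto simp: set_in_ends p_def s_def)
  have "(p, r) \<in> ?R" and "(s, q) \<in> ?R" unfolding R by auto
  then have "f p = r" and "f s = q" unfolding graph by auto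
  have closing: "(f a, a) \<in> equiv_cl ?R'"
    if a: "{a, a'} = {p, s}" "(a, a') \<notin> equiv_cl ?R" for a a'
  proof (rule cycle_connects_successor[OF finite_set fS inj])
    show "a \<in> ?S" using insertI1[of a "{a'}", unfolded a(1)] pS sS by blast
    fix u assume u: "u \<in> ?S" "(a, u) \<in> equiv_cl ((\<lambda>v. (v, f v)) ` ?S)" "u \<noteq> a"
    from u(2) have "(a, u) \<in> equiv_cl ?R" by (simp only: graph)
    with a(2) have "u \<noteq> a'" by blast
    with u(3) have "u \<notin> {p, s}" unfolding a(1)[symmetric] by simp
    moreover have "(u, f u) \<in> ?R" unfolding graph using u(1) by blast
    then have "(u, f u) \<in> {(p, r), (s, q)} \<union> Rest" by (simp only: R)
    ultimately have "(u, f u) \<in> Rest" by blast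
    then show "(u, f u) \<in> ?R'" unfolding R0 by blast
  qed
  show "(lab D k 2, lab D k 0) \<in> equiv_cl ?R'"
    using closing[OF refl ps] \<open>f p = r\<close> by (simp add: p_def r_def)
  have "(s, p) \<notin> equiv_cl ?R" using ps equiv_cl_sym[of s p] by blast
  with closing[OF insert_commute] show "(lab D k 1, lab D k 3) \<in> equiv_cl ?R'"
    using \<open>f s = q\<close> by (simp add: q_def s_def)
qed

lemma equiv_cl_strand_rel_smoothing:
  assumes wf: "wf_diagram D" and k: "k < length (sites D)" and ck: "snd (sites D ! k) \<noteq> Zero"
    and K1: "K1 \<in> comps D" and K2: "K2 \<in> comps D" and ne: "K1 \<noteq> K2"
    and pK1: "lab D k 0 \<in> K1" and sK2: "lab D k 3 \<in> K2"
  shows "equiv_cl (strand_rel (set_type D k Zero)) = equiv_cl (insert (lab D k 0, lab D k 1) (strand_rel D))"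
proof -
  define p q r s where "p = lab D k 0" and "q = lab D k 1" and "r = lab D k 2" and "s = lab D k 3"
  let ?R = "strand_rel D"
  let ?R' = "strand_rel (set_type D k Zero)"
  obtain Rest where R: "?R = {(p, r), (s, q)} \<union> Rest" and R0: "?R' = {(p, q), (s, r)} \<union> Rest"
    using strand_rel_smoothing_split[OF k ck] unfolding p_def q_def r_def s_def .
  have "(p, r) \<in> equiv_cl ?R'" and "(s, q) \<in> equiv_cl ?R'"
    using smoothing_keeps_strands_connected[OF assms] unfolding p_def q_def r_def s_def
    by (blast intro: equiv_cl_sym[of _ _ ?R'])+
  then have sub1: "insert (p, q) ?R \<subseteq> equiv_cl ?R'"
    unfolding R by (auto simp: R0 intro: r_into_equiv_cl)
  have sub2: "?R' \<subseteq> equiv_cl (insert (p, q) ?R)"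
  proof -
    let ?E = "equiv_cl (insert (p, q) ?R)"
    have sq: "(s, q) \<in> ?E" and pq: "(p, q) \<in> ?E" and pr: "(p, r) \<in> ?E" and "Rest \<subseteq> ?E"
      unfolding R by (auto intro: r_into_equiv_cl)
    have "(s, r) \<in> ?E" by (rule equiv_cl_trans[OF equiv_cl_trans[OF sq equiv_cl_sym[OF pq]] pr])
    with \<open>(p, q) \<in> ?E\<close> \<open>Rest \<subseteq> ?E\<close> show ?thesis unfolding R0 by blast
  qed
  have "equiv_cl ?R' = equiv_cl (insert (p, q) ?R)"
    by (rule antisym[OF equiv_cl_subset[OF sub2] equiv_cl_subset[OF sub1]])
  then show ?thesis by (simp only: p_def q_def)
qed

lemma comps_set_type_Zero:
  assumes wf: "wf_diagram D" and k: "k < length (sites D)" and ck: "snd (sites D ! k) \<noteq> Zero"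
    and K1: "K1 \<in> comps D" and K2: "K2 \<in> comps D" and ne: "K1 \<noteq> K2"
    and cr: "crossing_between D k K1 K2"
  shows "comps (set_type D k Zero) = insert (K1 \<union> K2) (comps D - {K1, K2})"
proof -
  have oriented: "comps (set_type D k Zero) = insert (K1 \<union> K2) (comps D - {K1, K2})"
    if K1: "K1 \<in> comps D" and K2: "K2 \<in> comps D" and ne: "K1 \<noteq> K2"
      and pK1: "lab D k 0 \<in> K1" and sK2: "lab D k 3 \<in> K2" for K1 K2
  proof -
    let ?E = "equiv_cl (strand_rel D)"
    have "lab D k 0 \<in> arcs D" using wf k by (auto simp: wf_diagram_def set_in_ends)
    moreover have "K1 = ?E `` {lab D k 0}" and "K2 = ?E `` {lab D k 1}"
      using quotient_equiv_cl_class[OF K1[unfolded comps_def] pK1]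
        quotient_equiv_cl_class[OF K2[unfolded comps_def] crossing_strand_labels(2)[OF k ck K1 K2 pK1 sK2]]
      by simp_all
    ultimately show ?thesis
      unfolding comps_def arcs_set_type equiv_cl_strand_rel_smoothing[OF wf k ck K1 K2 ne pK1 sK2]
      by (simp only: quotient_equiv_cl_insert)
  qed
  have swap: "insert (K2 \<union> K1) (comps D - {K2, K1}) = insert (K1 \<union> K2) (comps D - {K1, K2})"
    by (simp add: Un_commute insert_commute)
  from cr consider "lab D k 0 \<in> K1 \<and> lab D k 3 \<in> K2" | "lab D k 0 \<in> K2 \<and> lab D k 3 \<in> K1"
    unfolding crossing_between_def Let_def by blast
  then show ?thesis
    using oriented[OF K1 K2 ne] oriented[OF K2 K1 ne[symmetric]] swap by cases auto
qed

lemma comps_mem_of_Union: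
  assumes "C \<subseteq> comps D" and "K \<in> comps D" and "x \<in> K" and "x \<in> \<Union>C"
  shows "K \<in> C"
proof -
  obtain K' where "K' \<in> C" and "x \<in> K'" using assms(4) by blast
  then have "K' = K"
    using quotient_equiv_cl_class[of K' "arcs D" "strand_rel D" x]
      quotient_equiv_cl_class[of K "arcs D" "strand_rel D" x]
      assms(1-3) by (auto simp: comps_def)
  then show ?thesis using \<open>K' \<in> C\<close> by simp
qed

lemma finite_comps: "wf_diagram D \<Longrightarrow> finite (comps D)"
  by (simp add: comps_def quotient_def wf_diagram_def arcs_def)

lemma Un_comps_notin_comps:
  assumes K1: "K1 \<in> comps D" and K2: "K2 \<in> comps D" and "K1 \<noteq> K2"
  shows "K1 \<union> K2 \<notin> comps D"
proof
  assume "K1 \<union> K2 \<in> comps D"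
  obtain x where "x \<in> K1"
    using K1 unfolding comps_def by (metis Image_singleton_iff equiv_cl_refl quotientE)
  obtain y where "y \<in> K2"
    using K2 unfolding comps_def by (metis Image_singleton_iff equiv_cl_refl quotientE)
  have "K1 \<union> K2 = K1" and "K1 \<union> K2 = K2"
    using comps_mem_of_Union[of "{K1 \<union> K2}" D K1 x] comps_mem_of_Union[of "{K1 \<union> K2}" D K2 y]
      \<open>K1 \<union> K2 \<in> comps D\<close> \<open>x \<in> K1\<close> \<open>y \<in> K2\<close> K1 K2 by auto
  then show False using \<open>K1 \<noteq> K2\<close> by simp
qed

section \<open>The skein relation\<close>

lemma finite_full_sites: "finite (full_sites D K)"
  by (rule finite_subset[of _ "{..<length (sites D)}"]) (auto simp: full_sites_def)

lemma site_edges_crossing_change: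
  "c \<noteq> Zero \<Longrightarrow> c' \<noteq> Zero \<Longrightarrow> \<not> (site_lab x 0 \<in> K \<and> site_lab x 3 \<in> K) \<Longrightarrow>
   site_edges K a x c = site_edges K a x c'"
  by (simp add: site_edges_def Let_def)

lemma site_edges_outside:
  "site_lab x 0 \<notin> K \<Longrightarrow> site_lab x 1 \<notin> K \<Longrightarrow> site_lab x 2 \<notin> K \<Longrightarrow> site_lab x 3 \<notin> K \<Longrightarrow>
   site_edges K a x c = {}"
  by (simp add: site_edges_def Let_def)

lemma jonesV_eq_if_inert_sites:
  assumes len: "length (sites D') = length (sites D)"
    and labels: "\<And>j. j < length (sites D) \<Longrightarrow> fst (sites D' ! j) = fst (sites D ! j)"
    and inert: "\<And>j. j < length (sites D) \<Longrightarrow> snd (sites D' ! j) \<noteq> snd (sites D ! j) \<Longrightarrow>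
        \<not> (lab D j 0 \<in> K \<and> lab D j 3 \<in> K) \<and>
        (\<forall>a. site_edges K a (fst (sites D ! j)) (snd (sites D' ! j))
              = site_edges K a (fst (sites D ! j)) (snd (sites D ! j)))"
  shows "jonesV D' K m t = jonesV D K m t"
proof -
  have F: "full_sites D' K = full_sites D K"
  proof -
    have "j \<in> full_sites D' K \<longleftrightarrow> j \<in> full_sites D K" for j
      using labels[of j] inert[of j] len by (cases "j < length (sites D)") (auto simp: full_sites_def)
    then show ?thesis by blast
  qed
  have "snd (sites D' ! j) = snd (sites D ! j)" if "j \<in> full_sites D K" for j
    using that inert[of j] by (auto simp: full_sites_def)
  then have W: "writhe D' K = writhe D K"
    unfolding writhe_def F by (intro sum.cong) auto
  have E: "site_edges K a (fst (sites D' ! j)) (snd (sites D' ! j))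
         = site_edges K a (fst (sites D ! j)) (snd (sites D ! j))" if "j < length (sites D)" for a j
    using labels[OF that] inert[OF that] by (cases "snd (sites D' ! j) = snd (sites D ! j)") auto
  have "state_loops D' K T = state_loops D K T" for T
  proof -
    have "(\<Union>j\<in>{..<length (sites D)}. site_edges K (j \<in> T) (fst (sites D' ! j)) (snd (sites D' ! j)))
        = (\<Union>j\<in>{..<length (sites D)}. site_edges K (j \<in> T) (fst (sites D ! j)) (snd (sites D ! j)))"
      by (rule SUP_cong) (simp_all add: E)
    then show ?thesis unfolding state_loops_def len by simp
  qed
  then have "bracket D' K A = bracket D K A" for A
    unfolding bracket_def F by simp
  then show ?thesis unfolding jonesV_def W by simp
qed

lemma state_loops_set_type_cong:
  assumes k: "k < length (sites D)"
    and T: "\<And>j. j < length (sites D) \<Longrightarrow> j \<noteq> k \<Longrightarrow> j \<in> T1 \<longleftrightarrow> j \<in> T2"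
    and e: "site_edges K (k \<in> T1) (fst (sites D ! k)) c1 \<union> (site_edges K (k \<in> T1) (fst (sites D ! k)) c1)\<inverse>
          = site_edges K (k \<in> T2) (fst (sites D ! k)) c2 \<union> (site_edges K (k \<in> T2) (fst (sites D ! k)) c2)\<inverse>"
  shows "state_loops (set_type D k c1) K T1 = state_loops (set_type D k c2) K T2"
proof -
  define U where "U c T = (\<Union>j<length (sites D).
      site_edges K (j \<in> T) (fst (sites (set_type D k c) ! j)) (snd (sites (set_type D k c) ! j)))" for c T
  define Rest where "Rest T = (\<Union>j\<in>{..<length (sites D)} - {k}.
      site_edges K (j \<in> T) (fst (sites D ! j)) (snd (sites D ! j)))" for T
  have U: "U c T = site_edges K (k \<in> T) (fst (sites D ! k)) c \<union> Rest T" for c T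
  proof -
    have "U c T = (\<Union>j\<in>insert k ({..<length (sites D)} - {k}).
        site_edges K (j \<in> T) (fst (sites (set_type D k c) ! j)) (snd (sites (set_type D k c) ! j)))"
      using k by (simp add: U_def insert_absorb)
    also have "\<dots> = site_edges K (k \<in> T) (fst (sites D ! k)) c \<union> Rest T"
      unfolding UN_insert Rest_def using k by (simp add: nth_sites_set_type)
    finally show ?thesis .
  qed
  have "Rest T1 = Rest T2" unfolding Rest_def using T by (intro SUP_cong) auto
  then have "U c1 T1 \<union> (U c1 T1)\<inverse> = U c2 T2 \<union> (U c2 T2)\<inverse>"
    using e unfolding U by blast
  then show ?thesis unfolding state_loops_def equiv_cl_def U_def length_sites_set_type by simp
qed

lemma sum_Pow_insert_weighted:
  fixes A :: real and g :: "'a set \<Rightarrow> real"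
  assumes A: "A \<noteq> 0" and k: "k \<notin> F" and fin: "finite F"
  shows "(\<Sum>T\<in>Pow (insert k F). A powi (int (card T) - int (card (insert k F - T))) * g T)
       = (\<Sum>T\<in>Pow F. A powi (int (card T) - int (card (F - T))) * (A * g (insert k T) + inverse A * g T))"
proof -
  have shift: "A powi (e + 1) = A * A powi e" "A powi (e - 1) = inverse A * A powi e" for e :: int
    using A by (simp_all add: power_int_add power_int_diff field_simps)
  have weight_in: "A powi (int (card (insert k T)) - int (card (insert k F - insert k T)))
      = A * A powi (int (card T) - int (card (F - T)))" if "T \<subseteq> F" for T
  proof -
    have "finite T" and "k \<notin> T" and "insert k F - insert k T = F - T"
      using that k fin finite_subset by auto
    then have "int (card (insert k T)) - int (card (insert k F - insert k T))
        = (int (card T) - int (card (F - T))) + 1"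
      by simp
    then show ?thesis by (simp only: shift)
  qed
  have weight_out: "A powi (int (card T) - int (card (insert k F - T)))
      = inverse A * A powi (int (card T) - int (card (F - T)))" if "T \<subseteq> F" for T
  proof -
    have "insert k F - T = insert k (F - T)" using that k by auto
    then have "int (card T) - int (card (insert k F - T)) = (int (card T) - int (card (F - T))) - 1"
      using k fin by simp
    then show ?thesis by (simp only: shift)
  qed
  have "(\<Sum>T\<in>Pow (insert k F). A powi (int (card T) - int (card (insert k F - T))) * g T)
      = (\<Sum>T\<in>Pow F. A powi (int (card T) - int (card (insert k F - T))) * g T)
        + (\<Sum>T\<in>insert k ` Pow F. A powi (int (card T) - int (card (insert k F - T))) * g T)"
    unfolding Pow_insert using k fin by (intro sum.union_disjoint) auto
  also have "(\<Sum>T\<in>insert k ` Pow F. A powi (int (card T) - int (card (insert k F - T))) * g T)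
      = (\<Sum>T\<in>Pow F. A * (A powi (int (card T) - int (card (F - T))) * g (insert k T)))"
  proof -
    have "inj_on (insert k) (Pow F)" using k by (auto simp: inj_on_def)
    then show ?thesis
      using weight_in
      by (simp only: sum.reindex comp_def) (intro sum.cong refl, simp only: Pow_iff mult.assoc)
  qed
  also have "(\<Sum>T\<in>Pow F. A powi (int (card T) - int (card (insert k F - T))) * g T)
      = (\<Sum>T\<in>Pow F. inverse A * (A powi (int (card T) - int (card (F - T))) * g T))"
    using weight_out by (intro sum.cong refl) (simp only: Pow_iff mult.assoc)
  finally show ?thesis by (simp add: sum.distrib distrib_left mult_ac add.commute)
qed

lemma full_sites_set_type:
  "k < length (sites D) \<Longrightarrow> full_sites (set_type D k c) K =
     (if c \<noteq> Zero \<and> lab D k 0 \<in> K \<and> lab D k 3 \<in> K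
      then insert k (full_sites D K - {k}) else full_sites D K - {k})"
  by (auto simp: full_sites_def nth_sites_set_type)

lemma writhe_set_type_crossing:
  assumes k: "k < length (sites D)" and K: "lab D k 0 \<in> K" "lab D k 3 \<in> K" and c: "c \<noteq> Zero"
  shows "writhe (set_type D k c) K = writhe (set_type D k Zero) K + (if c = Pos then 1 else -1)"
proof -
  define F where "F = full_sites D K - {k}"
  let ?sign = "\<lambda>E j. if snd (sites E ! j) = Pos then 1 else (-1::int)"
  have fin: "finite F" using finite_full_sites by (simp add: F_def)
  have "k \<notin> F" by (simp add: F_def)
  have full: "full_sites (set_type D k c) K = insert k F" "full_sites (set_type D k Zero) K = F"
    using K c unfolding full_sites_set_type[OF k] F_def by auto
  have "writhe (set_type D k c) K = ?sign (set_type D k c) k + (\<Sum>j\<in>F. ?sign (set_type D k c) j)"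
    unfolding writhe_def full using fin \<open>k \<notin> F\<close> by simp
  also have "(\<Sum>j\<in>F. ?sign (set_type D k c) j) = writhe (set_type D k Zero) K"
    unfolding writhe_def full using k by (intro sum.cong) (auto simp: F_def snd_nth_sites_set_type)
  finally show ?thesis using k by (simp add: snd_nth_sites_set_type)
qed

text \<open>The A-smoothing of a positive crossing and the B-smoothing of a negative one are the
  oriented smoothing; the A-smoothing of a negative crossing is the B-smoothing of a positive one.\<close>

lemma state_loops_smoothings:
  assumes k: "k < length (sites D)" and K: "\<And>i. i < 4 \<Longrightarrow> lab D k i \<in> K" and T: "k \<notin> T"
  shows "state_loops (set_type D k Pos) K (insert k T) = state_loops (set_type D k Zero) K T"
    and "state_loops (set_type D k Neg) K T = state_loops (set_type D k Zero) K T"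
    and "state_loops (set_type D k Neg) K (insert k T) = state_loops (set_type D k Pos) K T"
proof -
  define x where "x = fst (sites D ! k)"
  have "site_lab x 0 \<in> K" "site_lab x 1 \<in> K" "site_lab x 2 \<in> K" "site_lab x 3 \<in> K"
    using K[of 0] K[of 1] K[of 2] K[of 3] by (auto simp: x_def)
  then have edges: "site_edges K a x Zero = {(site_lab x 0, site_lab x 1), (site_lab x 3, site_lab x 2)}"
    "site_edges K True x Pos = {(site_lab x 0, site_lab x 1), (site_lab x 2, site_lab x 3)}"
    "site_edges K False x Neg = {(site_lab x 0, site_lab x 1), (site_lab x 2, site_lab x 3)}"
    "site_edges K False x Pos = site_edges K True x Neg" for a
    by (simp_all add: site_edges_def Let_def)
  show "state_loops (set_type D k Pos) K (insert k T) = state_loops (set_type D k Zero) K T"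
    and "state_loops (set_type D k Neg) K T = state_loops (set_type D k Zero) K T"
    and "state_loops (set_type D k Neg) K (insert k T) = state_loops (set_type D k Pos) K T"
    by (rule state_loops_set_type_cong[OF k]; use T in \<open>auto simp: edges x_def[symmetric]\<close>)+
qed

lemma bracket_skein:
  assumes k: "k < length (sites D)" and K: "\<And>i. i < 4 \<Longrightarrow> lab D k i \<in> K" and A: "A \<noteq> 0"
  obtains B where "bracket (set_type D k Pos) K A = A * bracket (set_type D k Zero) K A + inverse A * B"
    and "bracket (set_type D k Neg) K A = inverse A * bracket (set_type D k Zero) K A + A * B"
proof -
  define F where "F = full_sites D K - {k}"
  define w where "w T = A powi (int (card T) - int (card (F - T)))" for T
  define \<delta> where "\<delta> = - A\<^sup>2 - A powi (-2)"
  define loops where "loops c T = \<delta> powi (int (state_loops (set_type D k c) K T) - 1)" for c T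
  have fin: "finite F" using finite_full_sites by (simp add: F_def)
  have kF: "k \<notin> F" by (simp add: F_def)
  have kT: "k \<notin> T" if "T \<in> Pow F" for T using that kF by auto
  have full: "full_sites (set_type D k Pos) K = insert k F" "full_sites (set_type D k Neg) K = insert k F"
    "full_sites (set_type D k Zero) K = F"
    using K[of 0] K[of 3] unfolding full_sites_set_type[OF k] F_def by auto
  have pos_A: "loops Pos (insert k T) = loops Zero T"
    and neg_B: "loops Neg T = loops Zero T"
    and neg_A: "loops Neg (insert k T) = loops Pos T" if "k \<notin> T" for T
    using state_loops_smoothings[OF k K that] by (simp_all add: loops_def)
  define B where "B = (\<Sum>T\<in>Pow F. w T * loops Pos T)"
  have Zero: "bracket (set_type D k Zero) K A = (\<Sum>T\<in>Pow F. w T * loops Zero T)"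
    unfolding bracket_def full w_def loops_def \<delta>_def ..
  have "bracket (set_type D k Pos) K A = (\<Sum>T\<in>Pow F. w T * (A * loops Pos (insert k T) + inverse A * loops Pos T))"
    unfolding bracket_def full w_def loops_def \<delta>_def using A kF fin by (rule sum_Pow_insert_weighted)
  also have "\<dots> = (\<Sum>T\<in>Pow F. w T * (A * loops Zero T + inverse A * loops Pos T))"
    by (intro sum.cong) (simp_all add: pos_A kT)
  also have "\<dots> = A * bracket (set_type D k Zero) K A + inverse A * B"
    unfolding Zero B_def by (simp add: sum_distrib_left sum.distrib algebra_simps)
  finally have P: "bracket (set_type D k Pos) K A = A * bracket (set_type D k Zero) K A + inverse A * B" .
  have "bracket (set_type D k Neg) K A = (\<Sum>T\<in>Pow F. w T * (A * loops Neg (insert k T) + inverse A * loops Neg T))"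
    unfolding bracket_def full w_def loops_def \<delta>_def using A kF fin by (rule sum_Pow_insert_weighted)
  also have "\<dots> = (\<Sum>T\<in>Pow F. w T * (A * loops Pos T + inverse A * loops Zero T))"
    by (intro sum.cong) (simp_all add: neg_A neg_B kT)
  also have "\<dots> = inverse A * bracket (set_type D k Zero) K A + A * B"
    unfolding Zero B_def by (simp add: sum_distrib_left sum.distrib algebra_simps)
  finally show thesis using P that by blast
qed

lemma jones_skein_identity:
  fixes A Z B s P :: real
  assumes "A \<noteq> 0"
  shows "A ^ 4 * ((-1) ^ Suc n * (- s * (P * inverse (A ^ 3))) * (A * Z + inverse A * B))
       - inverse (A ^ 4) * ((-1) ^ Suc n * (- s * (P * A ^ 3)) * (inverse A * Z + A * B))
     = (A\<^sup>2 - inverse (A\<^sup>2)) * ((-1) ^ n * (s * P) * Z)"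
  using assms by (simp add: field_simps) (simp add: algebra_simps power_numeral_reduce)

lemma jonesV_skein:
  assumes k: "k < length (sites D)" and K: "\<And>i. i < 4 \<Longrightarrow> lab D k i \<in> K" and t: "t > 0"
  shows "t * jonesV (set_type D k Pos) K (Suc m) t - inverse t * jonesV (set_type D k Neg) K (Suc m) t
       = (t powr (1/2) - t powr (-1/2)) * jonesV (set_type D k Zero) K m t"
proof -
  define A where "A = t powr (1/4)"
  have A: "A \<noteq> 0" using t by (simp add: A_def)
  obtain B where P: "bracket (set_type D k Pos) K A = A * bracket (set_type D k Zero) K A + inverse A * B"
    and N: "bracket (set_type D k Neg) K A = inverse A * bracket (set_type D k Zero) K A + A * B"
    using bracket_skein[OF k K A] by blast
  define w where "w = writhe (set_type D k Zero) K"
  have "lab D k 0 \<in> K" and "lab D k 3 \<in> K" using K by simp_all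
  then have wP: "writhe (set_type D k Pos) K = w + 1" and wN: "writhe (set_type D k Neg) K = w - 1"
    using writhe_set_type_crossing[OF k] by (simp_all add: w_def)
  have sign: "(-1::real) powi (w + 1) = - ((-1) powi w)" "(-1::real) powi (w - 1) = - ((-1) powi w)"
    by (simp_all add: power_int_add power_int_diff)
  have "A powi (-3 * (w + 1)) = A powi (-3 * w - 3)" and "A powi (-3 * (w - 1)) = A powi (-3 * w + 3)"
    by (rule arg_cong[where f = "power_int A"], simp)+
  then have weight: "A powi (-3 * (w + 1)) = A powi (-3 * w) * inverse (A ^ 3)"
      "A powi (-3 * (w - 1)) = A powi (-3 * w) * A ^ 3"
    using A by (simp_all add: power_int_diff power_int_add divide_inverse power_int_minus)
  have t4: "t = A ^ 4" using t by (simp add: A_def powr_realpow[symmetric] powr_powr)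
  have t2: "t powr (1/2) = A\<^sup>2" "t powr (-1/2) = inverse (A\<^sup>2)"
    using t by (simp_all add: A_def powr_realpow[symmetric] powr_powr powr_minus[symmetric])
  have "t * jonesV (set_type D k Pos) K (Suc m) t - inverse t * jonesV (set_type D k Neg) K (Suc m) t
      = A ^ 4 * ((-1) ^ Suc (Suc m) * ((-1) powi (w + 1) * A powi (-3 * (w + 1)))
                  * (A * bracket (set_type D k Zero) K A + inverse A * B))
        - inverse (A ^ 4) * ((-1) ^ Suc (Suc m) * ((-1) powi (w - 1) * A powi (-3 * (w - 1)))
                  * (inverse A * bracket (set_type D k Zero) K A + A * B))"
    by (simp only: jonesV_def Let_def A_def[symmetric] P N wP wN Suc_eq_plus1) (simp only: t4)
  also have "\<dots> = (A\<^sup>2 - inverse (A\<^sup>2)) * ((-1) ^ Suc m * ((-1) powi w * A powi (-3 * w))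
                  * bracket (set_type D k Zero) K A)"
    unfolding sign weight by (rule jones_skein_identity[OF A])
  also have "\<dots> = (t powr (1/2) - t powr (-1/2)) * jonesV (set_type D k Zero) K m t"
    by (simp only: jonesV_def Let_def A_def[symmetric] w_def[symmetric] t2 Suc_eq_plus1)
  finally show ?thesis .
qed

lemma sqrt_ratio_eq:
  assumes "(t::real) > 0"
  shows "(t powr (1/2) - t powr (-1/2)) / (t powr (1/2) + t powr (-1/2)) = (t - 1) / (t + 1)"
proof -
  define u where "u = t powr (1/2)"
  have u: "u > 0" and tu: "t = u\<^sup>2" and inv: "t powr (-1/2) = inverse u"
    using assms by (simp_all add: u_def powr_realpow[symmetric] powr_powr powr_minus[symmetric])
  have "(t powr (1/2) - t powr (-1/2)) / (t powr (1/2) + t powr (-1/2)) = (u - inverse u) / (u + inverse u)"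
    by (simp only: inv u_def)
  also have "\<dots> = (u * (u - inverse u)) / (u * (u + inverse u))"
    using u by simp
  also have "\<dots> = (t - 1) / (t + 1)"
    using u by (simp add: tu algebra_simps power2_eq_square)
  finally show ?thesis .
qed

lemma Xinv_skein:
  assumes k: "k < length (sites D)" and K: "\<And>i. i < 4 \<Longrightarrow> lab D k i \<in> \<Union>C" and t: "t > 0"
    and C': "card C = Suc (card C')" "card C' \<ge> 1" "\<Union>C' = \<Union>C"
  shows "t * Xinv (set_type D k Pos) C t - inverse t * Xinv (set_type D k Neg) C t
       = (t - 1) / (t + 1) * Xinv (set_type D k Zero) C' t"
proof -
  define s where "s = t powr (1/2) + t powr (-1/2)"
  have "s > 0" unfolding s_def using t by (intro add_pos_pos) simp_all
  then have s: "s \<noteq> 0" by simp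
  obtain c where c: "card C' = Suc c" using C'(2) by (cases "card C'") auto
  have "int (Suc (card C')) - 1 = int (Suc c)" and "int (card C') - 1 = int c" using c by simp_all
  then have sp: "s powi (int (Suc (card C')) - 1) = s * s powi (int (card C') - 1)"
    by (simp only: power_int_of_nat power_Suc)
  have "t * Xinv (set_type D k Pos) C t - inverse t * Xinv (set_type D k Neg) C t
      = (t * jonesV (set_type D k Pos) (\<Union>C) (Suc (card C')) t
         - inverse t * jonesV (set_type D k Neg) (\<Union>C) (Suc (card C')) t) / s powi (int (Suc (card C')) - 1)"
    unfolding Xinv_def C'(1) s_def[symmetric] by (simp add: diff_divide_distrib)
  also have "\<dots> = (t powr (1/2) - t powr (-1/2)) / s
                   * (jonesV (set_type D k Zero) (\<Union>C') (card C') t / s powi (int (card C') - 1))"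
    unfolding sp C'(3) using s jonesV_skein[OF k K t, of "card C'"] by simp
  also have "\<dots> = (t - 1) / (t + 1) * Xinv (set_type D k Zero) C' t"
    unfolding Xinv_def s_def sqrt_ratio_eq[OF t] ..
  finally show ?thesis .
qed

section \<open>Derivatives at t = 1\<close>

lemma smooth_pos_bracket: "smooth_pos (\<lambda>t. bracket D K (t powr (1/4)))"
proof -
  have nz: "\<forall>t>0. t powr (1/4) \<noteq> (0::real)" by simp
  have loop_nz: "\<forall>t>0. - (t powr (1/4))\<^sup>2 - (t powr (1/4)) powi (-2) \<noteq> (0::real)"
  proof (intro allI impI)
    fix t :: real assume "t > 0"
    then have "(t powr (1/4))\<^sup>2 > 0" and "(t powr (1/4)) powi (-2) > 0" by auto
    then show "- (t powr (1/4))\<^sup>2 - (t powr (1/4)) powi (-2) \<noteq> 0" by linarith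
  qed
  show ?thesis
    unfolding bracket_def
    by (intro smooth_pos_sum smooth_pos_mult smooth_pos_powi smooth_pos_diff smooth_pos_power
        smooth_pos_uminus smooth_pos_powr nz loop_nz)
      (auto simp: finite_full_sites)
qed

lemma smooth_pos_jonesV: "smooth_pos (jonesV D K m)"
proof -
  have "smooth_pos (\<lambda>t. (-1) ^ (m + 1) * ((-1) powi writhe D K * (t powr (1/4)) powi (-3 * writhe D K))
                        * bracket D K (t powr (1/4)))"
    by (intro smooth_pos_mult smooth_pos_const smooth_pos_powi smooth_pos_powr smooth_pos_bracket) simp
  then show ?thesis unfolding jonesV_def Let_def by simp
qed

lemma smooth_pos_Xinv: "smooth_pos (Xinv D C)"
proof -
  have nz: "\<forall>t>0. t powr (1/2) + t powr (-1/2) \<noteq> (0::real)"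
    by (metis add_pos_pos powr_gt_zero less_irrefl)
  show ?thesis
    unfolding Xinv_def
    by (intro smooth_pos_divide smooth_pos_jonesV smooth_pos_powi smooth_pos_add smooth_pos_powr nz)
      (use nz in \<open>auto intro: power_int_not_zero\<close>)
qed

lemma smooth_pos_Phi: "smooth_pos (Phi D)"
proof (cases "ncomp D = 0")
  case True
  then have "Phi D = (\<lambda>t. 0)" by (simp add: Phi_def fun_eq_iff)
  then show ?thesis by (simp add: smooth_pos_const)
next
  case False
  then have "finite (comps D)" by (simp add: ncomp_def card_ge_0_finite)
  then have "smooth_pos (\<lambda>t. \<Sum>C\<in>Pow (comps D). (-1) ^ (ncomp D - card C) * Xinv D C t)"
    by (intro smooth_pos_sum smooth_pos_mult smooth_pos_const smooth_pos_Xinv) auto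
  then show ?thesis using False unfolding Phi_def by simp
qed

lemma higher_deriv_relation_at_1:
  assumes F: "smooth_pos F" and G: "smooth_pos G"
    and rel: "\<forall>t>0. (t\<^sup>2 + t) * F t = (t - 1) * G t"
  shows "2 * (deriv ^^ n) F 1 + 3 * real n * (deriv ^^ (n - 1)) F 1
           + real n * (real n - 1) * (deriv ^^ (n - 2)) F 1
         = real n * (deriv ^^ (n - 1)) G 1"
proof -
  have "(deriv ^^ n) (\<lambda>t. (t\<^sup>2 + t) * F t) 1 = (deriv ^^ n) (\<lambda>t. (t - 1) * G t) 1"
    using rel by (intro higher_deriv_cong_ev[OF eventually_eq_nhds_pos]) auto
  moreover have "(deriv ^^ n) (\<lambda>t. (t\<^sup>2 + t) * F t) 1 = 2 * (deriv ^^ n) F 1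
      + real n * 3 * (deriv ^^ (n - 1)) F 1 + real n * (real n - 1) * (deriv ^^ (n - 2)) F 1"
    using higher_deriv_quadratic_mult[OF F, where a=1 and b=1 and c=0 and x=1 and n=n] by simp
  moreover have "(deriv ^^ n) (\<lambda>t. (t - 1) * G t) 1 = real n * (deriv ^^ (n - 1)) G 1"
    using higher_deriv_quadratic_mult[OF G, where a=0 and b=1 and c="-1" and x=1 and n=n] by simp
  ultimately show ?thesis by (simp add: algebra_simps)
qed

lemma phi_coefficient_identity:
  fixes a b c g P Q :: real
  assumes rel: "2 * a + 3 * real (Suc (Suc m)) * b + real (Suc (Suc m)) * real (Suc m) * c
                = real (Suc (Suc m)) * g"
    and Q: "Q = -2 * P"
  shows "Q / fact (Suc (Suc m)) * a
       = - (P / fact (Suc m) * g) - 3/2 * (Q / fact (Suc m) * b) - 1/2 * (Q / fact m * c)"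
proof -
  have "g = (2 * a + 3 * real (Suc (Suc m)) * b + real (Suc (Suc m)) * real (Suc m) * c)
            / real (Suc (Suc m))"
    using rel by (simp add: field_simps del: of_nat_Suc)
  moreover have "(fact m :: real) > 0" by simp
  ultimately show ?thesis unfolding Q by (simp add: fact_Suc field_simps del: of_nat_Suc)
qed

lemma phi_recurrence_of_Phi_relation:
  assumes rel: "\<forall>t>0. (t\<^sup>2 + t) * (Phi A t - Phi B t) = (t - 1) * (Phi C t - Phi D t)"
    and A: "ncomp A = Suc n" and B: "ncomp B = Suc n" and C: "ncomp C = n" and D: "ncomp D = n"
    and i: "i \<ge> 1"
  shows "phi A i - phi B i = - (phi C i - phi D i)
           - 3/2 * (phi A (i - 1) - phi B (i - 1)) - 1/2 * (phi A (i - 2) - phi B (i - 2))"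
proof -
  obtain k where k: "i = int (Suc k)"
    using i by (metis pos_int_cases zero_less_one order_less_le_trans Suc_pred)
  define m where "m = n + k"
  have idx: "nat (int (Suc n) + i) = Suc (Suc m)" "nat (int (Suc n) + (i - 1)) = Suc m"
    "nat (int (Suc n) + (i - 2)) = m" "nat (int n + i) = Suc m"
    by (simp_all add: k m_def)
  have dPhi: "(deriv ^^ j) (\<lambda>t. Phi X t - Phi Y t) 1 = Phi_d X j - Phi_d Y j" for X Y j
    unfolding Phi_d_def by (simp add: higher_deriv_diff_pos smooth_pos_Phi)
  have "2 * (Phi_d A (Suc (Suc m)) - Phi_d B (Suc (Suc m)))
        + 3 * real (Suc (Suc m)) * (Phi_d A (Suc m) - Phi_d B (Suc m))
        + real (Suc (Suc m)) * real (Suc m) * (Phi_d A m - Phi_d B m)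
      = real (Suc (Suc m)) * (Phi_d C (Suc m) - Phi_d D (Suc m))"
    using higher_deriv_relation_at_1[OF smooth_pos_diff[OF smooth_pos_Phi smooth_pos_Phi]
        smooth_pos_diff[OF smooth_pos_Phi smooth_pos_Phi] rel, of "Suc (Suc m)"]
    unfolding dPhi by simp
  from phi_coefficient_identity[OF this, where P = "(-2) ^ n" and Q = "(-2) ^ Suc n"]
  show ?thesis
    unfolding phi_def A B C D idx right_diff_distrib by simp
qed

section \<open>Two mixed crossings between distinct components\<close>

lemma Phi_diff_eq_sum_supersets:
  assumes comps: "comps D' = comps D" and fin: "finite (comps D)" and S: "S \<subseteq> comps D" "S \<noteq> {}"
    and same: "\<And>C. C \<subseteq> comps D \<Longrightarrow> \<not> S \<subseteq> C \<Longrightarrow> Xinv D' C t = Xinv D C t"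
  shows "Phi D t - Phi D' t = (\<Sum>C\<in>Pow (comps D - S).
           (-1) ^ (card (comps D - S) - card C) * (Xinv D (S \<union> C) t - Xinv D' (S \<union> C) t))"
proof -
  let ?d = "\<lambda>C. (-1::real) ^ (ncomp D - card C) * (Xinv D C t - Xinv D' C t)"
  have "ncomp D \<noteq> 0" using fin S by (auto simp: ncomp_def)
  then have "Phi D t - Phi D' t = (\<Sum>C\<in>Pow (comps D). ?d C)"
    unfolding Phi_def ncomp_def comps by (simp add: sum_subtractf[symmetric] right_diff_distrib)
  also have "\<dots> = (\<Sum>C\<in>{C \<in> Pow (comps D). S \<subseteq> C}. ?d C)"
    by (rule sum.mono_neutral_right) (use fin same in auto)
  also have "{C \<in> Pow (comps D). S \<subseteq> C} = (\<lambda>C. S \<union> C) ` Pow (comps D - S)"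
  proof
    show "{C \<in> Pow (comps D). S \<subseteq> C} \<subseteq> (\<lambda>C. S \<union> C) ` Pow (comps D - S)"
    proof
      fix C assume "C \<in> {C \<in> Pow (comps D). S \<subseteq> C}"
      then have "C = S \<union> (C - S)" and "C - S \<in> Pow (comps D - S)" by auto
      then show "C \<in> (\<lambda>C. S \<union> C) ` Pow (comps D - S)" by blast
    qed
  qed (use S in auto)
  also have "(\<Sum>C\<in>(\<lambda>C. S \<union> C) ` Pow (comps D - S). ?d C) = (\<Sum>C\<in>Pow (comps D - S). ?d (S \<union> C))"
    by (rule sum.reindex_cong[where l = "\<lambda>C. S \<union> C"]) (auto simp: inj_on_def)
  also have "\<dots> = (\<Sum>C\<in>Pow (comps D - S).
           (-1) ^ (card (comps D - S) - card C) * (Xinv D (S \<union> C) t - Xinv D' (S \<union> C) t))"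
  proof (intro sum.cong refl)
    fix C assume "C \<in> Pow (comps D - S)"
    then have "C \<subseteq> comps D - S" by simp
    moreover have "finite S" and "finite C" using fin S \<open>C \<subseteq> comps D - S\<close> finite_subset by blast+
    ultimately have "card (S \<union> C) = card S + card C" and "card (comps D - S) = card (comps D) - card S"
      and "card (S \<union> C) \<le> card (comps D)"
      using fin S by (auto intro!: card_Un_disjoint card_Diff_subset card_mono)
    then show "?d (S \<union> C)
        = (-1) ^ (card (comps D - S) - card C) * (Xinv D (S \<union> C) t - Xinv D' (S \<union> C) t)"
      by (simp add: ncomp_def)
  qed
  finally show ?thesis .
qed

locale mixed_crossing_pair =
  fixes L :: diagram and i1 i2 :: nat and K1 K2 :: "nat set"
  assumes link: "link_diagram L"
    and i1: "i1 < length (sites L)" and i2: "i2 < length (sites L)" and i12: "i1 \<noteq> i2"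
    and pos: "snd (sites L ! i1) = Pos" and neg: "snd (sites L ! i2) = Neg"
    and K1: "K1 \<in> comps L" and K2: "K2 \<in> comps L" and K12: "K1 \<noteq> K2"
    and cross1: "crossing_between L i1 K1 K2" and cross2: "crossing_between L i2 K1 K2"
begin

text \<open>In the notation of the paper L is L_{+-}, and Lmm, Lmp, L0m, Lm0 are L_{--}, L_{-+},
  L_{0-} and L_{-0}.\<close>

abbreviation Lmm where "Lmm \<equiv> set_type L i1 Neg"

abbreviation Lmp where "Lmp \<equiv> set_type Lmm i2 Pos"

abbreviation L0m where "L0m \<equiv> set_type L i1 Zero"

abbreviation Lm0 where "Lm0 \<equiv> set_type Lmm i2 Zero"

lemma wf: "wf_diagram L" and crossing: "j < length (sites L) \<Longrightarrow> snd (sites L ! j) \<noteq> Zero"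
  using link by (auto simp: link_diagram_def)

lemma i2_Lmm: "i2 < length (sites Lmm)" and snd_Lmm_i2: "snd (sites Lmm ! i2) = Neg"
  using i1 i2 i12 neg by (simp_all add: snd_nth_sites_set_type)

lemma comps_Lmm: "comps Lmm = comps L"
  using i1 pos by (simp add: comps_set_type_crossing)

lemma comps_Lmp: "comps Lmp = comps L"
  using i2_Lmm snd_Lmm_i2 by (simp add: comps_set_type_crossing comps_Lmm)

lemma comps_L0m: "comps L0m = insert (K1 \<union> K2) (comps L - {K1, K2})"
  using comps_set_type_Zero[OF wf i1 crossing[OF i1] K1 K2 K12 cross1] .

lemma comps_Lm0: "comps Lm0 = insert (K1 \<union> K2) (comps L - {K1, K2})"
  using comps_set_type_Zero[OF _ i2_Lmm, of K1 K2] wf i1 snd_Lmm_i2 K1 K2 K12 cross2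
  by (simp add: comps_Lmm)

lemma labels_i1: "i < 4 \<Longrightarrow> lab L i1 i \<in> K1 \<union> K2"
  using crossing_between_labels[OF i1 crossing[OF i1] K1 K2 cross1] .

lemma labels_i2: "i < 4 \<Longrightarrow> lab L i2 i \<in> K1 \<union> K2"
  using crossing_between_labels[OF i2 crossing[OF i2] K1 K2 cross2] .

lemma Xinv_Lmp_eq:
  assumes C: "C \<subseteq> comps L" and not_both: "\<not> {K1, K2} \<subseteq> C"
  shows "Xinv Lmp C t = Xinv L C t"
proof -
  have snd_Lmp: "snd (sites Lmp ! j)
      = (if j = i2 then Pos else if j = i1 then Neg else snd (sites L ! j))" for j
    using i1 i2 by (simp add: snd_nth_sites_set_type)
  have "jonesV Lmp (\<Union>C) (card C) t = jonesV L (\<Union>C) (card C) t"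
  proof (rule jonesV_eq_if_inert_sites)
    fix j assume j: "j < length (sites L)"
    show "fst (sites Lmp ! j) = fst (sites L ! j)" using i1 i2 by simp
    assume changed: "snd (sites Lmp ! j) \<noteq> snd (sites L ! j)"
    have ij: "j = i1 \<or> j = i2"
    proof (rule ccontr)
      assume "\<not> (j = i1 \<or> j = i2)"
      then have "snd (sites Lmp ! j) = snd (sites L ! j)" using snd_Lmp[of j] by simp
      with changed show False by contradiction
    qed
    then have cr: "crossing_between L j K1 K2" using cross1 cross2 by (elim disjE) simp_all
    have sublink: "\<not> (lab L j 0 \<in> \<Union>C \<and> lab L j 3 \<in> \<Union>C)"
    proof
      assume "lab L j 0 \<in> \<Union>C \<and> lab L j 3 \<in> \<Union>C"
      with cr have "K1 \<in> C" and "K2 \<in> C"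
        using comps_mem_of_Union[OF C K1] comps_mem_of_Union[OF C K2]
        unfolding crossing_between_def Let_def by blast+
      with not_both show False by simp
    qed
    have "snd (sites Lmp ! j) \<noteq> Zero" using ij snd_Lmp[of j] by auto
    then have "site_edges (\<Union>C) a (fst (sites L ! j)) (snd (sites Lmp ! j))
             = site_edges (\<Union>C) a (fst (sites L ! j)) (snd (sites L ! j))" for a
      using crossing[OF j] sublink by (rule site_edges_crossing_change)
    with sublink show "\<not> (lab L j 0 \<in> \<Union>C \<and> lab L j 3 \<in> \<Union>C) \<and>
        (\<forall>a. site_edges (\<Union>C) a (fst (sites L ! j)) (snd (sites Lmp ! j))
              = site_edges (\<Union>C) a (fst (sites L ! j)) (snd (sites L ! j)))" by blast
  qed simp
  then show ?thesis by (simp add: Xinv_def)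
qed

lemma Xinv_Lm0_eq:
  assumes C: "C \<subseteq> comps L0m" and not_merged: "\<not> {K1 \<union> K2} \<subseteq> C"
  shows "Xinv Lm0 C t = Xinv L0m C t"
proof -
  have C': "C \<subseteq> comps L" and "K1 \<notin> C" and "K2 \<notin> C"
    using C not_merged Un_comps_notin_comps[OF K1 K2 K12] unfolding comps_L0m by auto
  then have outside: "x \<notin> \<Union>C" if "x \<in> K1 \<union> K2" for x
    using that comps_mem_of_Union[OF C' K1] comps_mem_of_Union[OF C' K2] by blast
  have snd_Lm0: "snd (sites Lm0 ! j) = (if j = i2 then Zero else if j = i1 then Neg else snd (sites L ! j))"
    and snd_L0m: "snd (sites L0m ! j) = (if j = i1 then Zero else snd (sites L ! j))" for j
    using i1 i2 by (simp_all add: snd_nth_sites_set_type)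
  have "jonesV Lm0 (\<Union>C) (card C) t = jonesV L0m (\<Union>C) (card C) t"
  proof (rule jonesV_eq_if_inert_sites)
    fix j assume j: "j < length (sites L0m)"
    show "fst (sites Lm0 ! j) = fst (sites L0m ! j)" using i1 i2 by simp
    assume changed: "snd (sites Lm0 ! j) \<noteq> snd (sites L0m ! j)"
    have ij: "j = i1 \<or> j = i2"
    proof (rule ccontr)
      assume "\<not> (j = i1 \<or> j = i2)"
      then have "snd (sites Lm0 ! j) = snd (sites L0m ! j)" using snd_Lm0[of j] snd_L0m[of j] by simp
      with changed show False by contradiction
    qed
    have merged: "lab L j i \<in> K1 \<union> K2" if "i < 4" for i
      using ij
    proof
      assume "j = i1"
      then show ?thesis using labels_i1[OF that] by simp
    next
      assume "j = i2"
      then show ?thesis using labels_i2[OF that] by simp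
    qed
    have out: "lab L0m j i \<notin> \<Union>C" if "i < 4" for i
      using outside[OF merged[OF that]] i1 by simp
    have "site_edges (\<Union>C) a (fst (sites L0m ! j)) c = {}" for a c
      using out[of 0] out[of 1] out[of 2] out[of 3] by (intro site_edges_outside) simp_all
    with out[of 0] show "\<not> (lab L0m j 0 \<in> \<Union>C \<and> lab L0m j 3 \<in> \<Union>C) \<and>
        (\<forall>a. site_edges (\<Union>C) a (fst (sites L0m ! j)) (snd (sites Lm0 ! j))
              = site_edges (\<Union>C) a (fst (sites L0m ! j)) (snd (sites L0m ! j)))" by simp
  qed simp
  then show ?thesis by (simp add: Xinv_def)
qed

lemma ncomp_L: "ncomp L = Suc (ncomp L0m)" and ncomp_Lmp: "ncomp Lmp = Suc (ncomp L0m)"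
  and ncomp_Lm0: "ncomp Lm0 = ncomp L0m"
proof -
  let ?R = "comps L - {K1, K2}"
  have fin: "finite ?R" using finite_comps[OF wf] by simp
  have "card (comps L) = card (insert K1 (insert K2 ?R))"
    using K1 K2 by (intro arg_cong[where f = card]) auto
  also have "\<dots> = Suc (Suc (card ?R))" using fin K12 by simp
  finally have "card (comps L) = Suc (Suc (card ?R))" .
  moreover have "card (comps L0m) = Suc (card ?R)"
    unfolding comps_L0m using fin Un_comps_notin_comps[OF K1 K2 K12] by simp
  ultimately show "ncomp L = Suc (ncomp L0m)" and "ncomp Lmp = Suc (ncomp L0m)"
    and "ncomp Lm0 = ncomp L0m"
    by (simp_all add: ncomp_def comps_Lmp comps_Lm0 comps_L0m)
qed

lemma Xinv_skein_pair:
  assumes C0: "C0 \<subseteq> comps L - {K1, K2}" and t: "t > 0"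
  shows "t * (Xinv L ({K1, K2} \<union> C0) t - Xinv Lmp ({K1, K2} \<union> C0) t)
       = (t - 1) / (t + 1) * (Xinv L0m ({K1 \<union> K2} \<union> C0) t - Xinv Lm0 ({K1 \<union> K2} \<union> C0) t)"
proof -
  let ?C = "{K1, K2} \<union> C0" and ?C' = "{K1 \<union> K2} \<union> C0"
  have "finite C0" using C0 finite_comps[OF wf] finite_subset by blast
  moreover have "K1 \<notin> C0" and "K2 \<notin> C0" and "K1 \<union> K2 \<notin> C0"
    using C0 Un_comps_notin_comps[OF K1 K2 K12] by auto
  ultimately have card: "card ?C = Suc (card ?C')" and "card ?C' \<ge> 1" using K12 by simp_all
  have union: "\<Union>?C' = \<Union>?C" by auto
  have in1: "lab L i1 i \<in> \<Union>?C" and in2: "lab Lmm i2 i \<in> \<Union>?C" if "i < 4" for i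
    using labels_i1[OF that] labels_i2[OF that] i1 by auto
  have "set_type L i1 Pos = L" using i1 pos by (rule set_type_id)
  then have skein1: "t * Xinv L ?C t - inverse t * Xinv Lmm ?C t = (t - 1) / (t + 1) * Xinv L0m ?C' t"
    using Xinv_skein[OF i1 in1 t card \<open>card ?C' \<ge> 1\<close> union] by simp
  have "set_type Lmm i2 Neg = Lmm" using i2_Lmm snd_Lmm_i2 by (rule set_type_id)
  then have skein2: "t * Xinv Lmp ?C t - inverse t * Xinv Lmm ?C t = (t - 1) / (t + 1) * Xinv Lm0 ?C' t"
    using Xinv_skein[OF i2_Lmm in2 t card \<open>card ?C' \<ge> 1\<close> union] by simp
  have "t * (Xinv L ?C t - Xinv Lmp ?C t)
      = (t * Xinv L ?C t - inverse t * Xinv Lmm ?C t) - (t * Xinv Lmp ?C t - inverse t * Xinv Lmm ?C t)"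
    by (simp add: algebra_simps)
  also have "\<dots> = (t - 1) / (t + 1) * (Xinv L0m ?C' t - Xinv Lm0 ?C' t)"
    unfolding skein1 skein2 by (simp add: algebra_simps)
  finally show ?thesis .
qed

lemma Phi_skein_pair:
  assumes t: "t > 0"
  shows "t * (Phi L t - Phi Lmp t) = (t - 1) / (t + 1) * (Phi L0m t - Phi Lm0 t)"
proof -
  define R where "R = comps L - {K1, K2}"
  have R0: "comps L0m - {K1 \<union> K2} = R"
    using Un_comps_notin_comps[OF K1 K2 K12] unfolding comps_L0m R_def by auto
  have "finite (comps L0m)" using finite_comps[OF wf] by (simp add: comps_L0m)
  have diff: "Phi L t - Phi Lmp t = (\<Sum>C\<in>Pow R. (-1) ^ (card R - card C)
      * (Xinv L ({K1, K2} \<union> C) t - Xinv Lmp ({K1, K2} \<union> C) t))"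
    unfolding R_def using K1 K2 Xinv_Lmp_eq
    by (intro Phi_diff_eq_sum_supersets[OF comps_Lmp finite_comps[OF wf]]) auto
  have diff0: "Phi L0m t - Phi Lm0 t = (\<Sum>C\<in>Pow R. (-1) ^ (card R - card C)
      * (Xinv L0m ({K1 \<union> K2} \<union> C) t - Xinv Lm0 ({K1 \<union> K2} \<union> C) t))"
    unfolding R0[symmetric] using Xinv_Lm0_eq
    by (intro Phi_diff_eq_sum_supersets[OF _ \<open>finite (comps L0m)\<close>])
      (auto simp: comps_L0m comps_Lm0)
  have "t * (Phi L t - Phi Lmp t) = (\<Sum>C\<in>Pow R. (-1) ^ (card R - card C)
      * (t * (Xinv L ({K1, K2} \<union> C) t - Xinv Lmp ({K1, K2} \<union> C) t)))"
    unfolding diff by (simp add: sum_distrib_left mult.left_commute)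
  also have "\<dots> = (\<Sum>C\<in>Pow R. (-1) ^ (card R - card C)
      * ((t - 1) / (t + 1) * (Xinv L0m ({K1 \<union> K2} \<union> C) t - Xinv Lm0 ({K1 \<union> K2} \<union> C) t)))"
    by (intro sum.cong refl) (simp only: Pow_iff R_def Xinv_skein_pair[OF _ t])
  also have "\<dots> = (t - 1) / (t + 1) * (Phi L0m t - Phi Lm0 t)"
    unfolding diff0 by (simp add: sum_distrib_left mult.left_commute)
  finally show ?thesis .
qed

lemma Phi_relation:
  assumes t: "t > 0"
  shows "(t\<^sup>2 + t) * (Phi L t - Phi Lmp t) = (t - 1) * (Phi L0m t - Phi Lm0 t)"
proof -
  have "(t\<^sup>2 + t) * (Phi L t - Phi Lmp t) = (t + 1) * (t * (Phi L t - Phi Lmp t))"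
    by (simp add: algebra_simps power2_eq_square)
  also have "\<dots> = (t - 1) * (Phi L0m t - Phi Lm0 t)"
    unfolding Phi_skein_pair[OF t] using t by simp
  finally show ?thesis .
qed

lemma phi_relation:
  assumes "i \<ge> 1"
  shows "phi L i - phi Lmp i = - (phi L0m i - phi Lm0 i)
           - 3/2 * (phi L (i - 1) - phi Lmp (i - 1)) - 1/2 * (phi L (i - 2) - phi Lmp (i - 2))"
  by (rule phi_recurrence_of_Phi_relation[OF _ ncomp_L ncomp_Lmp refl ncomp_Lm0 assms])
    (simp add: Phi_relation)

end

theorem lemma4p1:
  fixes L :: diagram and i1 i2 :: nat and K1 K2 :: "nat set"
  assumes "link_diagram L"
    and "i1 < length (sites L)" and "i2 < length (sites L)" and "i1 \<noteq> i2"
    and "snd (sites L ! i1) = Pos" and "snd (sites L ! i2) = Neg"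
    and "K1 \<in> comps L" and "K2 \<in> comps L" and "K1 \<noteq> K2"
    and "crossing_between L i1 K1 K2" and "crossing_between L i2 K1 K2"
  shows "(\<forall>t>0. (t\<^sup>2 + t) * (Phi L t - Phi (set_type (set_type L i1 Neg) i2 Pos) t)
                = (t - 1) * (Phi (set_type L i1 Zero) t - Phi (set_type (set_type L i1 Neg) i2 Zero) t))
       \<and> (\<forall>i::int. i \<ge> 1 \<longrightarrow>
            phi L i - phi (set_type (set_type L i1 Neg) i2 Pos) i
          = - (phi (set_type L i1 Zero) i - phi (set_type (set_type L i1 Neg) i2 Zero) i)
            - 3/2 * (phi L (i - 1) - phi (set_type (set_type L i1 Neg) i2 Pos) (i - 1))
            - 1/2 * (phi L (i - 2) - phi (set_type (set_type L i1 Neg) i2 Pos) (i - 2)))"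
proof -
  interpret mixed_crossing_pair L i1 i2 K1 K2
    by (fact mixed_crossing_pair.intro[OF assms])
  show ?thesis using Phi_relation phi_relation by blast
qed

end
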